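(* Fix $N\ge2$, a connected graph with Laplacian eigenvalues $0=\lambda_1<\lambda_2\le\dots\le\lambda_N$, and $\alpha,m,\tau,\gamma>0$. Then $$k\mapsto \|H_{\mathrm{DAPI}}\|_2^2=\frac{\alpha}{2m}\sum_{n=2}^N \frac{1}{1+\dfrac{\gamma\tau\lambda_n+k}{\gamma\lambda_n(\gamma\tau\lambda_n+k)+k^2m\lambda_n}}$$ is strictly increasing on $(0,\infty)$, and $\lim_{k\to\infty}\|H_{\mathrm{DAPI}}\|_2^2=\frac{\alpha}{2m}(N-1)=\|H_{\mathrm{std}}\|_2^2$.
   Context: $H_{\mathrm{std}}$: $\dot\theta=\omega$, $\dot\omega=-\tfrac m\tau L_B\theta-\tfrac1\tau\omega+\tfrac1\tau w$, $y=(\alpha L_B)^{1/2}\theta$. $H_{\mathrm{DAPI}}$: $\dot\theta=\omega$, $\dot\omega=-\tfrac m\tau L_B\theta-\tfrac1\tau\omega+\tfrac1\tau\Omega+\tfrac1\tau w$, $\dot\Omega=-\tfrac1k\omega-\tfrac1k\gamma L_B\Omega$, $y=(\alpha L_B)^{1/2}\theta$; $L_B$ is the weighted Laplacian of the graph, and $k>0$ is the integral time constant of the secondary controller. $\|H\|_2^2:=\int_0^\infty\operatorname{tr}(Ce^{At}BB^Te^{A^Tt}C^T)\,dt$. *)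

theory Defs
  imports "HOL-Analysis.Analysis"
begin

primrec matpow :: "real^'s^'s \<Rightarrow> nat \<Rightarrow> real^'s^'s" where
  "matpow M 0 = mat 1"
| "matpow M (Suc k) = M ** matpow M k"

definition mexp :: "real^'s^'s \<Rightarrow> real^'s^'s" where
  "mexp M = (\<Sum>k. (1 / (fact k :: real)) *\<^sub>R matpow M k)"

definition psd_matrix :: "real^'n^'n \<Rightarrow> bool" where
  "psd_matrix S \<longleftrightarrow> transpose S = S \<and> (\<forall>x. 0 \<le> x \<bullet> (S *v x))"

definition msqrt :: "real^'n^'n \<Rightarrow> real^'n^'n" where
  "msqrt M = (THE S. psd_matrix S \<and> S ** S = M)"

definition h2sq :: "real^'s^'s \<Rightarrow> real^'i^'s \<Rightarrow> real^'s^'o \<Rightarrow> real" where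
  "h2sq A B C = integral {0..} (\<lambda>t::real.
      trace (C ** mexp (t *\<^sub>R A) ** B ** transpose B ** mexp (t *\<^sub>R transpose A) ** transpose C))"

definition blockmat :: "('b::finite \<Rightarrow> 'b \<Rightarrow> real^'n::finite^'n) \<Rightarrow> real^('n \<times> 'b)^('n \<times> 'b)" where
  "blockmat M = (\<chi> p q. (M (snd p) (snd q)) $ fst p $ fst q)"

definition blockcol :: "('b::finite \<Rightarrow> real^'n::finite^'n) \<Rightarrow> real^'n^('n \<times> 'b)" where
  "blockcol M = (\<chi> p j. (M (snd p)) $ fst p $ j)"

definition blockrow :: "('b::finite \<Rightarrow> real^'n::finite^'n) \<Rightarrow> real^('n \<times> 'b)^'n" where
  "blockrow M = (\<chi> i q. (M (snd q)) $ i $ fst q)"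

definition weighted_laplacian :: "('n::finite \<Rightarrow> 'n \<Rightarrow> real) \<Rightarrow> real^'n^'n" where
  "weighted_laplacian w = (\<chi> i j. if i = j then (\<Sum>l\<in>UNIV - {i}. w i l) else - w i j)"

definition graph_connected :: "('n \<Rightarrow> 'n \<Rightarrow> real) \<Rightarrow> bool" where
  "graph_connected w \<longleftrightarrow> (\<forall>i j. (i, j) \<in> {(a, b). a \<noteq> b \<and> w a b > 0}\<^sup>*)"

section \<open>The two systems (state = (theta, omega) resp. (theta, omega, Omega))\<close>

definition A_std :: "real^'n^'n \<Rightarrow> real \<Rightarrow> real \<Rightarrow> real^('n \<times> 2)^('n \<times> 2)" where
  "A_std L m \<tau> = blockmat (\<lambda>a b.
     if a = 0 \<and> b = 0 then mat 0 else
     if a = 0 \<and> b = 1 then mat 1 else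
     if a = 1 \<and> b = 0 then (- m / \<tau>) *\<^sub>R L else
     (- 1 / \<tau>) *\<^sub>R mat 1)"

definition B_std :: "'n itself \<Rightarrow> real \<Rightarrow> real^'n^('n \<times> 2)" where
  "B_std _ \<tau> = blockcol (\<lambda>a. if a = 0 then mat 0 else (1 / \<tau>) *\<^sub>R mat 1)"

definition C_std :: "real^'n^'n \<Rightarrow> real \<Rightarrow> real^('n \<times> 2)^'n" where
  "C_std L \<alpha> = blockrow (\<lambda>a. if a = 0 then msqrt (\<alpha> *\<^sub>R L) else mat 0)"

definition A_dapi :: "real^'n^'n \<Rightarrow> real \<Rightarrow> real \<Rightarrow> real \<Rightarrow> real \<Rightarrow> real^('n \<times> 3)^('n \<times> 3)" where
  "A_dapi L m \<tau> \<gamma> k = blockmat (\<lambda>a b.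
     if a = 0 then (if b = 1 then mat 1 else mat 0) else
     if a = 1 then (if b = 0 then (- m / \<tau>) *\<^sub>R L else
                    if b = 1 then (- 1 / \<tau>) *\<^sub>R mat 1 else (1 / \<tau>) *\<^sub>R mat 1) else
     (if b = 0 then mat 0 else if b = 1 then (- 1 / k) *\<^sub>R mat 1 else (- \<gamma> / k) *\<^sub>R L))"

definition B_dapi :: "'n itself \<Rightarrow> real \<Rightarrow> real^'n^('n \<times> 3)" where
  "B_dapi _ \<tau> = blockcol (\<lambda>a. if a = 1 then (1 / \<tau>) *\<^sub>R mat 1 else mat 0)"

definition C_dapi :: "real^'n^'n \<Rightarrow> real \<Rightarrow> real^('n \<times> 3)^'n" where
  "C_dapi L \<alpha> = blockrow (\<lambda>a. if a = 0 then msqrt (\<alpha> *\<^sub>R L) else mat 0)"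

definition H2sq_std :: "real^'n^'n \<Rightarrow> real \<Rightarrow> real \<Rightarrow> real \<Rightarrow> real" where
  "H2sq_std L \<alpha> m \<tau> = h2sq (A_std L m \<tau>) (B_std TYPE('n) \<tau>) (C_std L \<alpha>)"

definition H2sq_dapi :: "real^'n^'n \<Rightarrow> real \<Rightarrow> real \<Rightarrow> real \<Rightarrow> real \<Rightarrow> real \<Rightarrow> real" where
  "H2sq_dapi L \<alpha> m \<tau> \<gamma> k = h2sq (A_dapi L m \<tau> \<gamma> k) (B_dapi TYPE('n) \<tau>) (C_dapi L \<alpha>)"

end

theory Submission
  imports Defs "HOL-Computational_Algebra.Polynomial" "HOL-Real_Asymp.Real_Asymp"
begin

text \<open>
  The Laplacian L is symmetric, so it has an orthonormal eigenbasis. Every block of the matrices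
  A, B, C of both systems is a function of L, hence the system splits along this basis into
  independent modes: a second-order mode (standard case) or a third-order mode (DAPI), in which
  L is replaced by an eigenvalue. The squared H2 norm is the sum of the modal output energies,
  the integral of theta^2 for each mode. Each modal integral equals Q(0) for the quadratic form Q
  solving the Lyapunov equation, Q' = -theta^2; that Q tends to 0 follows from a strict Lyapunov
  function W = Q + K E built from the mechanical energy E. The mode of the zero eigenvalue does
  not contribute since it is not observed. This gives the closed form, and monotonicity in k and
  the limit are elementary properties of the rational summands.
\<close>

section \<open>Matrix exponential\<close>

lemma matpow_scaleR: "matpow (c *\<^sub>R M) k = c^k *\<^sub>R matpow M k"
  by (induction k) (auto simp: vec_eq_iff matrix_matrix_mult_def sum_distrib_left algebra_simps)

lemma matpow_commute: "matpow M k ** M = M ** matpow M k"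
proof (induction k)
  case 0 then show ?case by simp
next
  case (Suc k)
  have "matpow M (Suc k) ** M = M ** (matpow M k ** M)" by (simp add: matrix_mul_assoc)
  also have "\<dots> = M ** matpow M (Suc k)" using Suc by simp
  finally show ?case .
qed

lemma matpow_transpose: "matpow (transpose M) k = transpose (matpow M k)"
proof (induction k)
  case 0 then show ?case by (simp add: transpose_mat)
next
  case (Suc k)
  have "matpow (transpose M) (Suc k) = transpose M ** transpose (matpow M k)" using Suc by simp
  also have "\<dots> = transpose (matpow M k ** M)" by (simp add: matrix_transpose_mul)
  also have "\<dots> = transpose (matpow M (Suc k))" by (simp add: matpow_commute)
  finally show ?case .
qed

definition abs_entry_sum :: "real^'s^'s \<Rightarrow> real" where
  "abs_entry_sum M = (\<Sum>i\<in>UNIV. \<Sum>j\<in>UNIV. \<bar>M $ i $ j\<bar>)"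

lemma abs_entry_sum_nonneg: "0 \<le> abs_entry_sum M"
  unfolding abs_entry_sum_def by (auto intro: sum_nonneg)

lemma abs_matpow_entry_le: "\<bar>matpow M k $ i $ j\<bar> \<le> abs_entry_sum M ^ k"
proof (induction k arbitrary: i j)
  case 0 then show ?case by (simp add: mat_def)
next
  case (Suc k)
  have "\<bar>matpow M (Suc k) $ i $ j\<bar> = \<bar>\<Sum>l\<in>UNIV. M $ i $ l * matpow M k $ l $ j\<bar>"
    by (simp add: matrix_matrix_mult_def)
  also have "\<dots> \<le> (\<Sum>l\<in>UNIV. \<bar>M $ i $ l\<bar> * abs_entry_sum M ^ k)"
    by (rule order_trans[OF sum_abs]) (auto intro!: sum_mono simp: abs_mult intro: mult_left_mono Suc)
  also have "\<dots> = (\<Sum>l\<in>UNIV. \<bar>M $ i $ l\<bar>) * abs_entry_sum M ^ k" by (simp add: sum_distrib_right)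
  also have "\<dots> \<le> abs_entry_sum M * abs_entry_sum M ^ k"
  proof (rule mult_right_mono)
    show "(\<Sum>l\<in>UNIV. \<bar>M $ i $ l\<bar>) \<le> abs_entry_sum M" unfolding abs_entry_sum_def
      by (rule member_le_sum[where f="\<lambda>i. \<Sum>j\<in>UNIV. \<bar>M $ i $ j\<bar>"]) (auto intro: sum_nonneg)
  qed (simp add: abs_entry_sum_nonneg)
  finally show ?case by simp
qed

lemma summable_matpow_entry_powser:
  "summable (\<lambda>k. matpow M k $ i $ j / fact k * y ^ k)"
proof (rule summable_comparison_test[OF _ summable_exp[of "abs_entry_sum M * \<bar>y\<bar>"]])
  show "\<exists>N. \<forall>n\<ge>N. norm (matpow M n $ i $ j / fact n * y ^ n) \<le> inverse (fact n) * (abs_entry_sum M * \<bar>y\<bar>) ^ n"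
  proof (intro exI allI impI)
    fix n :: nat
    have "norm (matpow M n $ i $ j / fact n * y ^ n) = \<bar>matpow M n $ i $ j\<bar> * \<bar>y\<bar>^n / fact n"
      by (simp add: abs_mult power_abs)
    also have "\<dots> \<le> abs_entry_sum M ^ n * \<bar>y\<bar>^n / fact n"
      by (intro divide_right_mono mult_right_mono abs_matpow_entry_le) auto
    finally show "norm (matpow M n $ i $ j / fact n * y ^ n) \<le> inverse (fact n) * (abs_entry_sum M * \<bar>y\<bar>) ^ n"
      by (simp add: power_mult_distrib field_simps)
  qed
qed

lemma summable_vec_componentwise:
  fixes f :: "nat \<Rightarrow> 'a::real_normed_vector^'n"
  assumes "\<And>i. summable (\<lambda>k. f k $ i)"
  shows "summable f"
proof -
  have "f sums (\<chi> i. suminf (\<lambda>k. f k $ i))"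
    unfolding sums_def
  proof (rule vec_tendstoI)
    fix i
    have "(\<lambda>n. \<Sum>k<n. f k $ i) \<longlonglongrightarrow> suminf (\<lambda>k. f k $ i)"
      using assms[of i] summable_LIMSEQ by blast
    then show "((\<lambda>n. (\<Sum>k<n. f k) $ i) \<longlongrightarrow> (\<chi> i. suminf (\<lambda>k. f k $ i)) $ i) sequentially"
      by (simp add: sum_component)
  qed
  then show ?thesis by (auto simp: summable_def)
qed

lemma summable_mexp_series: "summable (\<lambda>k. (1 / fact k :: real) *\<^sub>R matpow M k)"
proof (rule summable_vec_componentwise, rule summable_vec_componentwise)
  fix i j
  show "summable (\<lambda>k. ((1 / fact k :: real) *\<^sub>R matpow M k) $ i $ j)"
    using summable_matpow_entry_powser[of M i j 1] by simp
qed

lemma mexp_scaleR_entry: "mexp (t *\<^sub>R M) $ i $ j = (\<Sum>k. matpow M k $ i $ j / fact k * t ^ k)"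
proof -
  have "(\<lambda>k. (1 / fact k :: real) *\<^sub>R matpow (t *\<^sub>R M) k) sums mexp (t *\<^sub>R M)"
    unfolding mexp_def using summable_mexp_series by (rule summable_sums)
  from sums_vec_nth[OF sums_vec_nth[OF this, of i], of j]
  have "(\<lambda>k. matpow M k $ i $ j / fact k * t ^ k) sums mexp (t *\<^sub>R M) $ i $ j"
    by (simp add: matpow_scaleR mult.commute)
  then show ?thesis by (simp add: sums_iff)
qed

lemma mexp_entry: "mexp M $ i $ j = (\<Sum>k. matpow M k $ i $ j / fact k)"
  using mexp_scaleR_entry[of 1 M i j] by simp

lemma summable_matpow_entry: "summable (\<lambda>k. matpow M k $ i $ j / fact k)"
  using summable_matpow_entry_powser[of M i j 1] by simp

lemma mexp_mult_vec_component: "(mexp A *v v) $ p = (\<Sum>k. (matpow A k *v v) $ p / fact k)"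
proof -
  have "(mexp A *v v) $ p = (\<Sum>q\<in>UNIV. (\<Sum>k. matpow A k $ p $ q / fact k) * v $ q)"
    by (simp add: matrix_vector_mult_def mexp_entry)
  also have "\<dots> = (\<Sum>q\<in>UNIV. (\<Sum>k. matpow A k $ p $ q / fact k * v $ q))"
    by (intro sum.cong refl) (rule suminf_mult2[OF summable_matpow_entry])
  also have "\<dots> = (\<Sum>k. \<Sum>q\<in>UNIV. matpow A k $ p $ q / fact k * v $ q)"
    by (rule suminf_sum[symmetric]) (intro ballI summable_mult2 summable_matpow_entry)
  also have "\<dots> = (\<Sum>k. (matpow A k *v v) $ p / fact k)"
    by (simp add: matrix_vector_mult_def sum_divide_distrib algebra_simps)
  finally show ?thesis .
qed

lemma summable_matpow_mult_vec_component: "summable (\<lambda>k. (matpow A k *v v) $ p / fact k)"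
proof -
  have "summable (\<lambda>k. \<Sum>q\<in>UNIV. matpow A k $ p $ q / fact k * v $ q)"
    by (intro summable_sum ballI summable_mult2 summable_matpow_entry)
  then show ?thesis
    by (simp add: matrix_vector_mult_def sum_divide_distrib algebra_simps)
qed

text \<open>The vector \<xi> \<otimes> u, indexed like the state of a block system: (node, block).\<close>

definition kron_vec :: "real^'b \<Rightarrow> real^'n \<Rightarrow> real^('n \<times> 'b)" where
  "kron_vec \<xi> u = (\<chi> p. \<xi> $ snd p * u $ fst p)"

lemma matpow_kron_vec:
  assumes "\<And>z. A *v kron_vec z u = kron_vec (Am *v z) u"
  shows "matpow A k *v kron_vec \<xi> u = kron_vec (matpow Am k *v \<xi>) u"
proof (induction k)
  case 0 then show ?case by simp
next
  case (Suc k)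
  have "matpow A (Suc k) *v kron_vec \<xi> u = A *v (matpow A k *v kron_vec \<xi> u)"
    by (simp add: matrix_vector_mul_assoc)
  also have "\<dots> = kron_vec (Am *v (matpow Am k *v \<xi>)) u" using Suc assms by simp
  also have "\<dots> = kron_vec (matpow Am (Suc k) *v \<xi>) u" by (simp add: matrix_vector_mul_assoc)
  finally show ?case .
qed

lemma mexp_kron_vec:
  assumes "\<And>z. A *v kron_vec z u = kron_vec (Am *v z) u"
  shows "mexp A *v kron_vec \<xi> u = kron_vec (mexp Am *v \<xi>) u"
proof -
  have "(mexp A *v kron_vec \<xi> u) $ p = (mexp Am *v \<xi>) $ snd p * u $ fst p" for p
  proof -
    have "(mexp A *v kron_vec \<xi> u) $ p = (\<Sum>k. (matpow Am k *v \<xi>) $ snd p / fact k * u $ fst p)"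
      by (simp only: mexp_mult_vec_component matpow_kron_vec[OF assms]) (simp add: kron_vec_def)
    also have "\<dots> = (\<Sum>k. (matpow Am k *v \<xi>) $ snd p / fact k) * u $ fst p"
      by (rule suminf_mult2[symmetric]) (rule summable_matpow_mult_vec_component)
    finally show ?thesis by (simp add: mexp_mult_vec_component)
  qed
  then show ?thesis by (simp add: vec_eq_iff kron_vec_def)
qed

lemma mexp_transpose: "mexp (t *\<^sub>R transpose M) = transpose (mexp (t *\<^sub>R M))"
proof -
  have "mexp (t *\<^sub>R transpose M) $ i $ j = transpose (mexp (t *\<^sub>R M)) $ i $ j" for i j
  proof -
    have "mexp (t *\<^sub>R transpose M) $ i $ j = (\<Sum>k. transpose (matpow M k) $ i $ j / fact k * t ^ k)"
      by (simp only: mexp_scaleR_entry matpow_transpose)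
    then show ?thesis by (simp add: transpose_def mexp_scaleR_entry)
  qed
  then show ?thesis by (simp add: vec_eq_iff)
qed

lemma mexp_zero: "mexp (0 *\<^sub>R M) = mat 1"
proof -
  have "mexp (0 *\<^sub>R M) $ i $ j = mat 1 $ i $ j" for i j
    unfolding mexp_scaleR_entry using powser_zero[of "\<lambda>k. matpow M k $ i $ j / fact k"] by simp
  then show ?thesis by (simp add: vec_eq_iff)
qed

lemma has_real_derivative_mexp_entry:
  "((\<lambda>t. mexp (t *\<^sub>R M) $ i $ j) has_real_derivative (M ** mexp (t *\<^sub>R M)) $ i $ j) (at t)"
proof -
  define c where "c k = matpow M k $ i $ j / fact k" for k
  have f: "(\<lambda>t. mexp (t *\<^sub>R M) $ i $ j) = (\<lambda>t. \<Sum>k. c k * t ^ k)"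
    by (simp add: mexp_scaleR_entry c_def)
  have d: "((\<lambda>t. \<Sum>k. c k * t ^ k) has_real_derivative (\<Sum>k. diffs c k * t ^ k)) (at t)"
    by (rule termdiffs_strong_converges_everywhere) (unfold c_def, rule summable_matpow_entry_powser)
  have "(\<Sum>k. diffs c k * t ^ k) = (\<Sum>k. \<Sum>l\<in>UNIV. M $ i $ l * (matpow M k $ l $ j / fact k * t ^ k))"
  proof -
    have "diffs c k * t ^ k = (\<Sum>l\<in>UNIV. M $ i $ l * (matpow M k $ l $ j / fact k * t ^ k))" for k
    proof -
      have "diffs c k = matpow M (Suc k) $ i $ j / fact k"
        by (simp add: diffs_def c_def divide_simps)
      then show ?thesis
        by (simp add: matrix_matrix_mult_def sum_divide_distrib sum_distrib_left sum_distrib_right algebra_simps)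
    qed
    then show ?thesis by simp
  qed
  also have "\<dots> = (\<Sum>l\<in>UNIV. \<Sum>k. M $ i $ l * (matpow M k $ l $ j / fact k * t ^ k))"
    by (rule suminf_sum) (intro ballI summable_mult summable_matpow_entry_powser)
  also have "\<dots> = (M ** mexp (t *\<^sub>R M)) $ i $ j"
    unfolding matrix_matrix_mult_def mexp_scaleR_entry vec_lambda_beta
    by (intro sum.cong refl) (rule suminf_mult[OF summable_matpow_entry_powser])
  finally show ?thesis using d f by simp
qed

lemma has_real_derivative_mexp_mult_vec:
  "((\<lambda>t. (mexp (t *\<^sub>R M) *v \<xi>) $ i) has_real_derivative (M *v (mexp (t *\<^sub>R M) *v \<xi>)) $ i) (at t)"
proof -
  have "((\<lambda>t. \<Sum>j\<in>UNIV. mexp (t *\<^sub>R M) $ i $ j * \<xi> $ j) has_real_derivative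
         (\<Sum>j\<in>UNIV. (M ** mexp (t *\<^sub>R M)) $ i $ j * \<xi> $ j)) (at t)"
    by (intro DERIV_sum DERIV_cmult_right has_real_derivative_mexp_entry)
  then show ?thesis
    by (simp add: matrix_vector_mul_assoc) (simp add: matrix_vector_mult_def)
qed

section \<open>Spectral theorem for symmetric matrices\<close>

lemma symmetric_matrix_inner:
  fixes L :: "real^'n^'n"
  assumes "transpose L = L"
  shows "x \<bullet> (L *v y) = (L *v x) \<bullet> y"
proof -
  have "x \<bullet> (L *v y) = (x v* L) \<bullet> y" by (simp add: dot_lmul_matrix)
  also have "x v* L = L *v x" using vector_transpose_matrix[of x L] assms by simp
  finally show ?thesis .
qed

lemma linear_dominated_by_quadratic_zero:
  fixes a c :: real
  assumes "\<And>t. 2 * t * a \<le> t^2 * c"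
  shows "a = 0"
proof (rule ccontr)
  assume "a \<noteq> 0"
  then have a2: "a * a > 0" by (metis mult_neg_neg mult_pos_pos linorder_neqE_linordered_idom)
  define e where "e = 1 / (\<bar>c\<bar> + 1)"
  have e: "e > 0" "e * c < 1" unfolding e_def by (auto simp: field_simps abs_if)
  have "2 * (e * a) * a \<le> (e * a)^2 * c" by (rule assms)
  then have "(a * a) * (2 * e) \<le> (a * a) * (e * (e * c))" by (simp add: power2_eq_square algebra_simps)
  then have "2 * e \<le> e * (e * c)" using a2 by (simp add: mult_le_cancel_left_pos)
  then have "2 \<le> e * c" using e by simp
  with e show False by simp
qed

lemma symmetric_rayleigh_max_eigenvector:
  fixes L :: "real^'n^'n"
  assumes sym: "transpose L = L" and subS: "subspace S" and invS: "\<And>y. y \<in> S \<Longrightarrow> L *v y \<in> S"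
    and vS: "v \<in> S" and nv: "norm v = 1"
    and vmax: "\<And>y. y \<in> S \<Longrightarrow> norm y = 1 \<Longrightarrow> y \<bullet> (L *v y) \<le> v \<bullet> (L *v v)"
  shows "L *v v = (v \<bullet> (L *v v)) *\<^sub>R v"
proof -
  define q where "q y = y \<bullet> (L *v y)" for y
  define M where "M = q v"
  have vv: "v \<bullet> v = 1" using nv by (simp add: norm_eq_1)
  have bound: "q y \<le> M * (y \<bullet> y)" if "y \<in> S" for y
  proof (cases "y = 0")
    case True then show ?thesis by (simp add: q_def)
  next
    case False
    have yS: "y /\<^sub>R norm y \<in> S" using that subS by (auto intro: subspace_scale)
    have "q (y /\<^sub>R norm y) \<le> M" using vmax[OF yS] False by (simp add: q_def M_def)
    then have h1: "q (y /\<^sub>R norm y) * (norm y)^2 \<le> M * (norm y)^2"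
      by (rule mult_right_mono) simp
    have h2: "q (y /\<^sub>R norm y) * (norm y)^2 = q y" using False
      by (simp add: q_def matrix_vector_mult_scaleR power2_eq_square divide_simps)
    from h1 h2 have "q y \<le> M * (norm y)^2" by simp
    then show ?thesis by (simp add: power2_norm_eq_inner)
  qed
  have key: "w \<bullet> (L *v v) = 0" if wS: "w \<in> S" and wv: "w \<bullet> v = 0" for w
  proof (rule linear_dominated_by_quadratic_zero)
    fix t :: real
    have "v + t *\<^sub>R w \<in> S" using vS wS subS by (auto intro: subspace_add subspace_scale)
    then have ineq: "q (v + t *\<^sub>R w) \<le> M * ((v + t *\<^sub>R w) \<bullet> (v + t *\<^sub>R w))" by (rule bound)
    have eq1: "q (v + t *\<^sub>R w) = M + 2 * t * (w \<bullet> (L *v v)) + t^2 * q w"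
    proof -
      have "v \<bullet> (L *v w) = w \<bullet> (L *v v)"
        using symmetric_matrix_inner[OF sym, of v w] by (simp add: inner_commute)
      then show ?thesis
        by (simp add: q_def M_def matrix_vector_right_distrib matrix_vector_mult_scaleR
            inner_add_left inner_add_right power2_eq_square algebra_simps)
    qed
    have eq2: "(v + t *\<^sub>R w) \<bullet> (v + t *\<^sub>R w) = 1 + t^2 * (w \<bullet> w)"
      using vv wv by (simp add: inner_add_left inner_add_right inner_commute power2_eq_square)
    from ineq have "M + 2 * t * (w \<bullet> (L *v v)) + t^2 * q w \<le> M * (1 + t^2 * (w \<bullet> w))"
      unfolding eq1 eq2 .
    then show "2 * t * (w \<bullet> (L *v v)) \<le> t^2 * (M * (w \<bullet> w) - q w)"
      by (simp add: algebra_simps)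
  qed
  define z where "z = L *v v - M *\<^sub>R v"
  have zS: "z \<in> S" unfolding z_def using invS[OF vS] vS subS
    by (auto intro: subspace_diff subspace_scale)
  have zv: "z \<bullet> v = 0"
    unfolding z_def using vv by (simp add: inner_diff_left inner_diff_right M_def q_def inner_commute)
  have "z \<bullet> (L *v v) = 0" by (rule key[OF zS zv])
  then have "z \<bullet> z = 0" using zv by (simp add: z_def inner_diff_right inner_diff_left)
  then have "z = 0" by simp
  then show ?thesis by (simp add: z_def M_def q_def)
qed

lemma symmetric_eigenvector_orthogonal_to:
  fixes L :: "real^'n^'n" and B :: "(real^'n) set"
  assumes sym: "transpose L = L" and fin: "finite B" and card: "card B < CARD('n)"
    and eigB: "\<And>b. b \<in> B \<Longrightarrow> \<exists>\<mu>. L *v b = \<mu> *\<^sub>R b"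
  obtains v \<mu> where "norm v = 1" "\<And>b. b \<in> B \<Longrightarrow> b \<bullet> v = 0" "L *v v = \<mu> *\<^sub>R v"
proof -
  define S where "S = {y. \<forall>x\<in>B. orthogonal x y}"
  have subS: "subspace S" unfolding S_def by (rule subspace_orthogonal_to_vectors)
  have invS: "L *v y \<in> S" if "y \<in> S" for y
    unfolding S_def mem_Collect_eq
  proof (intro ballI)
    fix x assume "x \<in> B"
    then obtain \<mu> where mu: "L *v x = \<mu> *\<^sub>R x" using eigB by blast
    have "x \<bullet> (L *v y) = (L *v x) \<bullet> y" by (rule symmetric_matrix_inner[OF sym])
    also have "\<dots> = \<mu> * (x \<bullet> y)" by (simp add: mu)
    finally have "x \<bullet> (L *v y) = \<mu> * (x \<bullet> y)" .
    moreover have "x \<bullet> y = 0" using that \<open>x \<in> B\<close> by (auto simp: S_def orthogonal_def)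
    ultimately show "orthogonal x (L *v y)" by (simp add: orthogonal_def)
  qed
  have dimB: "dim B < DIM(real^'n)"
    using dim_le_card'[OF fin] card by (simp add: DIM_cart)
  then obtain x0 :: "real^'n" where x0: "x0 \<noteq> 0" "\<And>y. y \<in> span B \<Longrightarrow> orthogonal x0 y"
    using orthogonal_to_subspace_exists[OF dimB] by blast
  have x0S: "x0 \<in> S" unfolding S_def using x0(2) span_base by (auto simp: orthogonal_commute)
  define K where "K = S \<inter> sphere 0 1"
  have cK: "compact K" unfolding K_def
    by (intro closed_Int_compact closed_subspace subS compact_sphere)
  have "x0 /\<^sub>R norm x0 \<in> K" unfolding K_def using x0 x0S subS
    by (auto intro: subspace_scale)
  then have neK: "K \<noteq> {}" by auto
  define q where "q y = y \<bullet> (L *v y)" for y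
  have "continuous_on K q" unfolding q_def
    by (intro continuous_on_inner continuous_on_id bounded_linear.continuous_on[OF matrix_vector_mul_bounded_linear])
  then obtain v where vK: "v \<in> K" and vmax: "\<And>y. y \<in> K \<Longrightarrow> q y \<le> q v"
    using continuous_attains_sup[OF cK neK] by blast
  have vS: "v \<in> S" and nv: "norm v = 1" using vK by (auto simp: K_def)
  have "L *v v = (v \<bullet> (L *v v)) *\<^sub>R v"
    using vmax by (intro symmetric_rayleigh_max_eigenvector[OF sym subS invS vS nv]) (auto simp: K_def q_def)
  moreover have "b \<bullet> v = 0" if "b \<in> B" for b
    using vS that by (auto simp: S_def orthogonal_def)
  ultimately show ?thesis using that nv by blast
qed

lemma orthonormal_eigenvectors_exist:
  fixes L :: "real^'n^'n"
  assumes sym: "transpose L = L" and k: "k \<le> CARD('n)"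
  shows "\<exists>B. finite B \<and> card B = k \<and> (\<forall>b\<in>B. norm b = 1 \<and> (\<exists>\<mu>. L *v b = \<mu> *\<^sub>R b))
            \<and> (\<forall>b\<in>B. \<forall>c\<in>B. b \<noteq> c \<longrightarrow> b \<bullet> c = 0)"
  using k
proof (induction k)
  case 0 then show ?case by (intro exI[of _ "{}"]) auto
next
  case (Suc k)
  then obtain B where B: "finite B" "card B = k" "\<forall>b\<in>B. norm b = 1 \<and> (\<exists>\<mu>. L *v b = \<mu> *\<^sub>R b)"
    "\<forall>b\<in>B. \<forall>c\<in>B. b \<noteq> c \<longrightarrow> b \<bullet> c = 0" by auto
  obtain v \<mu> where v: "norm v = 1" "\<And>b. b \<in> B \<Longrightarrow> b \<bullet> v = 0" "L *v v = \<mu> *\<^sub>R v"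
    using symmetric_eigenvector_orthogonal_to[OF sym B(1)] B Suc.prems by auto
  have "v \<notin> B"
  proof
    assume "v \<in> B"
    then have "v \<bullet> v = 0" using v(2) by blast
    then show False using v(1) by simp
  qed
  show ?case
  proof (intro exI[of _ "insert v B"] conjI)
    show "finite (insert v B)" using B by simp
    show "card (insert v B) = Suc k" using B \<open>v \<notin> B\<close> by simp
    show "\<forall>b\<in>insert v B. norm b = 1 \<and> (\<exists>\<mu>. L *v b = \<mu> *\<^sub>R b)" using B v by auto
    show "\<forall>b\<in>insert v B. \<forall>c\<in>insert v B. b \<noteq> c \<longrightarrow> b \<bullet> c = 0"
      using B(4) v(2) by (auto simp: inner_commute)
  qed
qed

definition orthonormal_basis :: "('n::finite \<Rightarrow> real^'n) \<Rightarrow> bool" where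
  "orthonormal_basis u \<longleftrightarrow> (\<forall>p q. u p \<bullet> u q = (if p = q then 1 else 0))"

lemma symmetric_matrix_eigenbasis:
  fixes L :: "real^'n^'n"
  assumes sym: "transpose L = L"
  obtains u :: "'n \<Rightarrow> real^'n" and \<mu> :: "'n \<Rightarrow> real"
  where "orthonormal_basis u" "\<And>p. L *v u p = \<mu> p *\<^sub>R u p"
proof -
  obtain B where B: "finite B" "card B = CARD('n)" "\<forall>b\<in>B. norm b = 1 \<and> (\<exists>\<mu>. L *v b = \<mu> *\<^sub>R b)"
    "\<forall>b\<in>B. \<forall>c\<in>B. b \<noteq> c \<longrightarrow> b \<bullet> c = 0"
    using orthonormal_eigenvectors_exist[OF sym, of "CARD('n)"] by auto
  obtain h where h: "bij_betw h (UNIV :: 'n set) B"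
    using finite_same_card_bij[of "UNIV :: 'n set" B] B by auto
  have hB: "h p \<in> B" for p using h by (auto simp: bij_betw_def)
  have hinj: "h p = h q \<Longrightarrow> p = q" for p q using h by (auto simp: bij_betw_def inj_on_def)
  define mu where "mu p = h p \<bullet> (L *v h p)" for p
  have mu: "L *v h p = mu p *\<^sub>R h p" for p
  proof -
    obtain c where c: "L *v h p = c *\<^sub>R h p" using B(3) hB[of p] by blast
    have "h p \<bullet> h p = 1" using B(3) hB[of p] by (simp add: norm_eq_1)
    then show ?thesis using c by (simp add: mu_def)
  qed
  show ?thesis
  proof (rule that[of h mu])
    show "orthonormal_basis h"
      unfolding orthonormal_basis_def
    proof (intro allI)
      fix p q
      show "h p \<bullet> h q = (if p = q then 1 else 0)"
      proof (cases "p = q")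
        case True then show ?thesis using B(3) hB[of p] by (simp add: norm_eq_1)
      next
        case False then show ?thesis using B(4) hB hinj by metis
      qed
    qed
  qed (rule mu)
qed

lemma sum_delta_mult: "(\<Sum>j\<in>UNIV. (if i = j then 1 else 0) * (f j :: real)) = f (i::'n::finite)"
proof -
  have "(\<Sum>j\<in>UNIV. (if i = j then 1 else 0) * f j) = (\<Sum>j\<in>UNIV. if j = i then f j else 0)"
    by (rule sum.cong) auto
  also have "\<dots> = f i" by simp
  finally show ?thesis .
qed

definition column_matrix :: "('n::finite \<Rightarrow> real^'n) \<Rightarrow> real^'n^'n" where
  "column_matrix u = (\<chi> i p. u p $ i)"

lemma transpose_column_matrix_mult:
  assumes "orthonormal_basis u"
  shows "transpose (column_matrix u) ** column_matrix u = mat 1"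
  using assms
  by (simp add: vec_eq_iff orthonormal_basis_def column_matrix_def matrix_matrix_mult_def transpose_def
      mat_def inner_vec_def)

lemma column_matrix_mult_transpose:
  assumes "orthonormal_basis u"
  shows "column_matrix u ** transpose (column_matrix u) = mat 1"
  using transpose_column_matrix_mult[OF assms] orthogonal_matrix[of "column_matrix u"]
  by (simp add: orthogonal_matrix_def)

lemma orthonormal_basis_completeness:
  assumes "orthonormal_basis u"
  shows "(\<Sum>p\<in>UNIV. u p $ i * u p $ j) = (if i = j then 1 else 0)"
proof -
  have "(column_matrix u ** transpose (column_matrix u)) $ i $ j = (if i = j then 1 else 0)"
    using column_matrix_mult_transpose[OF assms] by (simp add: mat_def)
  then show ?thesis by (simp add: matrix_matrix_mult_def column_matrix_def transpose_def)
qed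

lemma orthonormal_basis_expansion:
  assumes "orthonormal_basis u"
  shows "x = (\<Sum>p\<in>UNIV. (u p \<bullet> x) *\<^sub>R u p)"
proof -
  have "x $ i = (\<Sum>p\<in>UNIV. (u p \<bullet> x) * u p $ i)" for i
  proof -
    have "(\<Sum>p\<in>UNIV. (u p \<bullet> x) * u p $ i) = (\<Sum>p\<in>UNIV. \<Sum>j\<in>UNIV. u p $ j * x $ j * u p $ i)"
      by (simp add: inner_vec_def sum_distrib_right)
    also have "\<dots> = (\<Sum>j\<in>UNIV. (\<Sum>p\<in>UNIV. u p $ i * u p $ j) * x $ j)"
      by (subst sum.swap) (simp add: sum_distrib_right sum_distrib_left algebra_simps)
    also have "\<dots> = x $ i"
      by (simp add: orthonormal_basis_completeness[OF assms] sum_delta_mult)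
    finally show ?thesis by simp
  qed
  then show ?thesis by (simp add: vec_eq_iff sum_component)
qed

lemma orthonormal_basis_parseval:
  assumes "orthonormal_basis u"
  shows "x \<bullet> x = (\<Sum>p\<in>UNIV. (u p \<bullet> x)^2)"
proof -
  have "x \<bullet> x = x \<bullet> (\<Sum>p\<in>UNIV. (u p \<bullet> x) *\<^sub>R u p)"
    using orthonormal_basis_expansion[OF assms, of x] by simp
  also have "\<dots> = (\<Sum>p\<in>UNIV. (u p \<bullet> x)^2)"
    by (simp add: inner_sum_right power2_eq_square inner_commute)
  finally show ?thesis .
qed

lemma orthonormal_basis_norm: "orthonormal_basis u \<Longrightarrow> u p \<bullet> u p = 1"
  by (simp add: orthonormal_basis_def)

lemma column_matrix_conj_entry:
  "(transpose (column_matrix u) ** M ** column_matrix u) $ p $ q = u p \<bullet> (M *v u q)"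
  by (simp add: matrix_matrix_mult_def column_matrix_def transpose_def matrix_vector_mult_def inner_vec_def
      sum_distrib_left sum_distrib_right algebra_simps) (subst sum.swap, simp add: algebra_simps)

lemma det_char_eigenbasis:
  fixes L :: "real^'n^'n"
  assumes onb: "orthonormal_basis u" and eig: "\<And>p. L *v u p = \<mu> p *\<^sub>R u p"
  shows "det (x *\<^sub>R mat 1 - L) = (\<Prod>p\<in>UNIV. (x - \<mu> p))"
proof -
  define Q where "Q = column_matrix u"
  define M where "M = x *\<^sub>R mat 1 - L"
  have oQ: "orthogonal_matrix Q" using transpose_column_matrix_mult[OF onb] orthogonal_matrix Q_def by blast
  have dQ: "det Q * det Q = 1" using det_orthogonal_matrix[OF oQ] by auto
  have xI: "(x *\<^sub>R mat 1) *v v = x *\<^sub>R v" for v :: "real^'n"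
    by (metis scaleR_matrix_vector_assoc matrix_vector_mul_lid)
  have Mu: "M *v u q = (x - \<mu> q) *\<^sub>R u q" for q
    by (simp add: M_def xI eig matrix_vector_mult_diff_rdistrib scaleR_matrix_vector_assoc algebra_simps)
  have "det (transpose Q ** M ** Q) = det M"
    by (simp add: det_mul dQ algebra_simps)
  moreover have "det (transpose Q ** M ** Q) = (\<Prod>p\<in>UNIV. (x - \<mu> p))"
  proof (subst det_diagonal)
    fix p q :: 'n assume "p \<noteq> q"
    then show "(transpose Q ** M ** Q) $ p $ q = 0"
      using onb by (simp add: Q_def column_matrix_conj_entry Mu orthonormal_basis_def)
  next
    show "(\<Prod>i\<in>UNIV. (transpose Q ** M ** Q) $ i $ i) = (\<Prod>p\<in>UNIV. x - \<mu> p)"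
      using onb by (simp add: Q_def column_matrix_conj_entry Mu orthonormal_basis_def)
  qed
  ultimately show ?thesis by (simp add: M_def)
qed

definition root_poly :: "real multiset \<Rightarrow> real poly" where
  "root_poly A = prod_mset (image_mset (\<lambda>a. [:-a, 1:]) A)"

lemma root_poly_inj: "root_poly A = root_poly B \<Longrightarrow> A = B"
proof (induction A arbitrary: B)
  case empty
  show ?case
  proof (rule ccontr)
    assume "{#} \<noteq> B"
    then obtain b where "b \<in># B" by (metis multiset_nonemptyE)
    then have "poly (root_poly B) b = 0"
      by (auto simp: root_poly_def poly_prod_mset prod_mset_zero_iff)
    with empty show False by (simp add: root_poly_def)
  qed
next
  case (add a A)
  have "poly (root_poly B) a = 0" using add.prems[symmetric] by (simp add: root_poly_def poly_prod_mset)
  then have "a \<in># B" by (auto simp: root_poly_def poly_prod_mset prod_mset_zero_iff)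
  then obtain B' where B: "B = add_mset a B'" by (metis mset_add)
  have "[:-a, 1:] * root_poly A = [:-a, 1:] * root_poly B'"
    using add.prems by (simp add: B root_poly_def)
  moreover have "[:-a, 1:] \<noteq> (0::real poly)" by simp
  ultimately have "root_poly A = root_poly B'" by (metis mult_left_cancel)
  then have "A = B'" by (rule add.IH)
  then show ?case by (simp add: B)
qed

lemma sum_eq_if_roots_eq:
  fixes f :: "'a \<Rightarrow> real" and g :: "'b \<Rightarrow> real"
  assumes "finite I" "finite J"
    and eq: "\<And>x. (\<Prod>p\<in>I. (x - f p)) = (\<Prod>i\<in>J. (x - g i))"
  shows "(\<Sum>p\<in>I. h (f p)) = (\<Sum>i\<in>J. h (g i))"
proof -
  have "poly (root_poly (image_mset f (mset_set I))) = poly (root_poly (image_mset g (mset_set J)))"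
  proof
    fix x
    have "poly (root_poly (image_mset f (mset_set I))) x = (\<Prod>p\<in>I. (x - f p))"
      by (simp add: root_poly_def poly_prod_mset prod_unfold_prod_mset image_mset.compositionality o_def)
    moreover have "poly (root_poly (image_mset g (mset_set J))) x = (\<Prod>i\<in>J. (x - g i))"
      by (simp add: root_poly_def poly_prod_mset prod_unfold_prod_mset image_mset.compositionality o_def)
    ultimately show "poly (root_poly (image_mset f (mset_set I))) x = poly (root_poly (image_mset g (mset_set J))) x"
      using eq by simp
  qed
  then have "image_mset f (mset_set I) = image_mset g (mset_set J)"
    by (intro root_poly_inj) (simp add: poly_eq_poly_eq_iff)
  then have "sum_mset (image_mset h (image_mset f (mset_set I))) = sum_mset (image_mset h (image_mset g (mset_set J)))"
    by simp
  then show ?thesis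
    by (simp add: sum_unfold_sum_mset image_mset.compositionality o_def)
qed

lemma sum_if_zero_drop_first:
  fixes lam :: "nat \<Rightarrow> real"
  assumes "lam 1 = 0" and "\<And>n. 2 \<le> n \<Longrightarrow> n \<le> N \<Longrightarrow> lam n \<noteq> 0" and "1 \<le> N"
  shows "(\<Sum>i=1..N. if lam i = 0 then 0 else f (lam i)) = (\<Sum>n=2..N. f (lam n))"
proof -
  have "(\<Sum>i=1..N. if lam i = 0 then 0 else f (lam i)) = (\<Sum>i=Suc 1..N. if lam i = 0 then 0 else f (lam i))"
    using sum.atLeast_Suc_atMost[OF assms(3), of "\<lambda>i. if lam i = 0 then 0 else f (lam i)"] assms(1)
    by simp
  also have "\<dots> = (\<Sum>n=2..N. f (lam n))"
    using assms(2) by (intro sum.cong) (auto simp: numeral_2_eq_2)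
  finally show ?thesis .
qed

lemma symmetric_matrix_spectral_sum:
  fixes L :: "real^'n^'n" and lam :: "nat \<Rightarrow> real"
  assumes sym: "transpose L = L"
    and char: "\<And>x. det (x *\<^sub>R mat 1 - L) = (\<Prod>i=1..CARD('n). (x - lam i))"
    and lam1: "lam 1 = 0" and lam_pos: "\<And>n. 2 \<le> n \<Longrightarrow> n \<le> CARD('n) \<Longrightarrow> 0 < lam n"
  obtains u \<mu> where "orthonormal_basis u" "\<And>p. L *v u p = \<mu> p *\<^sub>R u p" "\<And>p. 0 \<le> \<mu> p"
    "\<And>f :: real \<Rightarrow> real. (\<Sum>p\<in>UNIV. if \<mu> p = 0 then 0 else f (\<mu> p)) = (\<Sum>n=2..CARD('n). f (lam n))"
proof -
  obtain u \<mu> where onb: "orthonormal_basis u" and eig: "\<And>p. L *v u p = \<mu> p *\<^sub>R u p"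
    using symmetric_matrix_eigenbasis[OF sym] by blast
  have roots: "(\<Prod>p\<in>UNIV. (x - \<mu> p)) = (\<Prod>i=1..CARD('n). (x - lam i))" for x
    using det_char_eigenbasis[OF onb eig, of x] char[of x] by simp
  have lam_nonneg: "0 \<le> lam i" if "1 \<le> i" "i \<le> CARD('n)" for i
    using that lam1 lam_pos[of i] by (cases "i = 1") auto
  have "0 \<le> \<mu> p" for p
  proof -
    have "(\<Prod>q\<in>UNIV. (\<mu> p - \<mu> q)) = 0" by (rule prod_zero[of UNIV]) auto
    then have "(\<Prod>i=1..CARD('n). (\<mu> p - lam i)) = 0" using roots[of "\<mu> p"] by simp
    then obtain i where "i \<in> {1..CARD('n)}" "\<mu> p = lam i" by auto
    then show ?thesis using lam_nonneg by auto
  qed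
  moreover have "(\<Sum>p\<in>UNIV. if \<mu> p = 0 then 0 else f (\<mu> p)) = (\<Sum>n=2..CARD('n). f (lam n))"
    for f :: "real \<Rightarrow> real"
  proof -
    have "(\<Sum>p\<in>UNIV. if \<mu> p = 0 then 0 else f (\<mu> p))
          = (\<Sum>i=1..CARD('n). if lam i = 0 then 0 else f (lam i))"
      by (rule sum_eq_if_roots_eq[OF _ _ roots]) simp_all
    also have "\<dots> = (\<Sum>n=2..CARD('n). f (lam n))"
      using lam1 by (intro sum_if_zero_drop_first) (auto dest!: lam_pos simp: Suc_leI)
    finally show ?thesis .
  qed
  ultimately show ?thesis using that onb eig by blast
qed

lemma matrix_vector_mult_sum_scaleR:
  fixes A :: "real^'n::finite^'m::finite"
  shows "A *v (\<Sum>p\<in>I. c p *\<^sub>R v p) = (\<Sum>p\<in>I. c p *\<^sub>R (A *v v p))"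
  using linear_sum[OF matrix_vector_mul_linear[of A], of "\<lambda>p. c p *\<^sub>R v p" I]
  by (simp add: o_def matrix_vector_mult_scaleR)

lemma matrix_eq_on_orthonormal_basis:
  assumes onb: "orthonormal_basis u" and eq: "\<And>p. A *v u p = B *v u p"
  shows "A = B"
proof -
  have "A *v x = B *v x" for x
  proof -
    have "A *v x = A *v (\<Sum>p\<in>UNIV. (u p \<bullet> x) *\<^sub>R u p)" using orthonormal_basis_expansion[OF onb, of x] by simp
    also have "\<dots> = B *v (\<Sum>p\<in>UNIV. (u p \<bullet> x) *\<^sub>R u p)" by (simp add: matrix_vector_mult_sum_scaleR eq)
    also have "\<dots> = B *v x" using orthonormal_basis_expansion[OF onb, of x] by simp
    finally show ?thesis .
  qed
  then show ?thesis by (simp add: matrix_eq)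
qed

lemma psd_root_eigenvector:
  fixes S M :: "real^'n^'n"
  assumes psd: "psd_matrix S" and sq: "S ** S = M" and Mu: "M *v v = \<nu> *\<^sub>R v" and nu: "\<nu> \<ge> 0"
  shows "S *v v = sqrt \<nu> *\<^sub>R v"
proof -
  have symS: "transpose S = S" using psd by (simp add: psd_matrix_def)
  define s where "s = sqrt \<nu>"
  have ss: "s * s = \<nu>" using nu by (simp add: s_def)
  show ?thesis
  proof (cases "s = 0")
    case True
    then have nu0: "\<nu> = 0" using ss by simp
    have "S *v (S *v v) = 0" using Mu nu0 sq by (simp add: matrix_vector_mul_assoc)
    then have "(S *v v) \<bullet> (S *v v) = 0"
      using symmetric_matrix_inner[OF symS, of "S *v v" v] by (simp add: inner_commute)
    then show ?thesis using True by (simp add: s_def)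
  next
    case False
    then have spos: "s > 0" using nu by (simp add: s_def)
    define d where "d = S *v v - s *\<^sub>R v"
    have "S *v d = M *v v - s *\<^sub>R (S *v v)"
      by (simp add: d_def matrix_vector_mult_diff_distrib matrix_vector_mult_scaleR
          matrix_vector_mul_assoc sq)
    also have "\<dots> = (- s) *\<^sub>R d" using ss Mu by (simp add: d_def algebra_simps)
    finally have Sd: "S *v d = (- s) *\<^sub>R d" .
    have "0 \<le> d \<bullet> (S *v d)" using psd by (simp add: psd_matrix_def)
    then have "0 \<le> - s * (d \<bullet> d)" by (simp add: Sd)
    then have "d \<bullet> d \<le> 0" using spos by (simp add: mult_le_0_iff)
    then have "d \<bullet> d = 0" using inner_ge_zero[of d] by linarith
    then have "d = 0" by simp
    then show ?thesis by (simp add: d_def s_def)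
  qed
qed

lemma msqrt_eigenbasis:
  fixes M :: "real^'n^'n"
  assumes onb: "orthonormal_basis u" and eig: "\<And>p. M *v u p = \<nu> p *\<^sub>R u p"
    and nonneg: "\<And>p. \<nu> p \<ge> 0"
  shows "msqrt M *v u q = sqrt (\<nu> q) *\<^sub>R u q"
proof -
  define S0 :: "real^'n^'n" where "S0 = (\<chi> i j. \<Sum>p\<in>UNIV. sqrt (\<nu> p) * u p $ i * u p $ j)"
  have S0x: "S0 *v x = (\<Sum>p\<in>UNIV. (sqrt (\<nu> p) * (u p \<bullet> x)) *\<^sub>R u p)" for x
    by (simp add: vec_eq_iff S0_def matrix_vector_mult_def sum_component inner_vec_def
        sum_distrib_left sum_distrib_right algebra_simps) (subst sum.swap, simp add: algebra_simps)
  have S0u: "S0 *v u q = sqrt (\<nu> q) *\<^sub>R u q" for q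
  proof -
    have "S0 *v u q = (\<Sum>p\<in>UNIV. (if p = q then sqrt (\<nu> q) else 0) *\<^sub>R u p)"
      unfolding S0x using onb by (intro sum.cong refl) (auto simp: orthonormal_basis_def)
    then show ?thesis by (simp add: if_distrib[of "\<lambda>c. c *\<^sub>R _"] cong: if_cong)
  qed
  have psd0: "psd_matrix S0"
    unfolding psd_matrix_def
  proof (intro conjI allI)
    show "transpose S0 = S0" by (simp add: vec_eq_iff S0_def transpose_def algebra_simps)
    fix x
    have "x \<bullet> (S0 *v x) = (\<Sum>p\<in>UNIV. sqrt (\<nu> p) * (u p \<bullet> x)^2)"
      by (simp add: S0x inner_sum_right power2_eq_square inner_commute algebra_simps)
    also have "\<dots> \<ge> 0" by (intro sum_nonneg mult_nonneg_nonneg) (auto simp: nonneg)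
    finally show "0 \<le> x \<bullet> (S0 *v x)" .
  qed
  have sq0: "S0 ** S0 = M"
  proof (rule matrix_eq_on_orthonormal_basis[OF onb])
    fix p
    show "(S0 ** S0) *v u p = M *v u p"
      using nonneg[of p] by (simp add: matrix_vector_mul_assoc[symmetric] S0u eig matrix_vector_mult_scaleR)
  qed
  have uniq: "S = S0" if "psd_matrix S \<and> S ** S = M" for S
  proof (rule matrix_eq_on_orthonormal_basis[OF onb])
    fix p
    show "S *v u p = S0 *v u p"
      using psd_root_eigenvector[of S M "u p" "\<nu> p"] that eig nonneg S0u by simp
  qed
  have "msqrt M = S0" unfolding msqrt_def
    by (rule the_equality) (intro conjI psd0 sq0, erule uniq)
  then show ?thesis by (simp add: S0u)
qed

lemma sum_prod_UNIV: "(\<Sum>p\<in>(UNIV::('a::finite \<times> 'b::finite) set). f p) = (\<Sum>a\<in>UNIV. \<Sum>b\<in>UNIV. f (a,b))"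
  by (subst UNIV_Times_UNIV[symmetric]) (simp add: sum.cartesian_product)

lemma blockmat_kron_vec:
  fixes M :: "'b::finite \<Rightarrow> 'b \<Rightarrow> real^'n::finite^'n"
  assumes "\<And>a b. M a b *v u = Mm $ a $ b *\<^sub>R u"
  shows "blockmat M *v kron_vec z u = kron_vec (Mm *v z) u"
proof -
  have "(blockmat M *v kron_vec z u) $ (i, a) = (Mm *v z) $ a * u $ i" for i a
  proof -
    have "(blockmat M *v kron_vec z u) $ (i, a) = (\<Sum>b\<in>UNIV. \<Sum>j\<in>UNIV. M a b $ i $ j * (z $ b * u $ j))"
      by (simp add: matrix_vector_mult_def blockmat_def kron_vec_def sum_prod_UNIV) (subst sum.swap, simp)
    also have "\<dots> = (\<Sum>b\<in>UNIV. z $ b * (M a b *v u) $ i)"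
      by (simp add: matrix_vector_mult_def sum_distrib_left algebra_simps)
    also have "\<dots> = (Mm *v z) $ a * u $ i"
      by (simp only: assms) (simp add: matrix_vector_mult_def sum_distrib_right sum_distrib_left algebra_simps)
    finally show ?thesis .
  qed
  then show ?thesis by (simp add: vec_eq_iff kron_vec_def)
qed

lemma blockcol_mult_vec:
  fixes Bb :: "'b::finite \<Rightarrow> real^'n::finite^'n"
  assumes "\<And>a. Bb a *v u = \<beta> $ a *\<^sub>R u"
  shows "blockcol Bb *v u = kron_vec \<beta> u"
proof -
  have "(blockcol Bb *v u) $ (i, a) = \<beta> $ a * u $ i" for i a
  proof -
    have "(blockcol Bb *v u) $ (i, a) = (Bb a *v u) $ i"
      by (simp add: matrix_vector_mult_def blockcol_def)
    then show ?thesis by (simp add: assms)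
  qed
  then show ?thesis by (simp add: vec_eq_iff kron_vec_def)
qed

lemma blockrow_kron_vec:
  fixes S :: "real^'n::finite^'n"
  shows "blockrow (\<lambda>a::'b::{finite,zero}. if a = 0 then S else mat 0) *v kron_vec \<eta> u = \<eta> $ 0 *\<^sub>R (S *v u)"
proof -
  have "(blockrow (\<lambda>a::'b. if a = 0 then S else mat 0) *v kron_vec \<eta> u) $ i = \<eta> $ 0 * (S *v u) $ i" for i
  proof -
    have inner: "(\<Sum>j\<in>UNIV. (if a = 0 then S else mat 0) $ i $ j * (\<eta> $ a * u $ j))
        = (if a = 0 then \<eta> $ 0 * (S *v u) $ i else 0)" for a :: 'b
      by (cases "a = 0") (auto simp: matrix_vector_mult_def mat_def sum_distrib_left algebra_simps)
    have "(blockrow (\<lambda>a::'b. if a = 0 then S else mat 0) *v kron_vec \<eta> u) $ i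
        = (\<Sum>a\<in>UNIV. \<Sum>j\<in>UNIV. (if a = 0 then S else mat 0) $ i $ j * (\<eta> $ a * u $ j))"
      by (simp add: matrix_vector_mult_def blockrow_def kron_vec_def sum_prod_UNIV) (subst sum.swap, simp)
    also have "\<dots> = (\<Sum>a::'b\<in>UNIV. if a = 0 then \<eta> $ 0 * (S *v u) $ i else 0)"
      by (simp only: inner)
    also have "\<dots> = \<eta> $ 0 * (S *v u) $ i" by simp
    finally show ?thesis .
  qed
  then show ?thesis by (simp add: vec_eq_iff)
qed

lemma uminus_matrix_vector_mult: "(- A) *v v = - (A *v (v::real^'n))"
  by (simp add: vec_eq_iff matrix_vector_mult_def sum_negf)

lemma scaleR_blockmat: "t *\<^sub>R blockmat M = blockmat (\<lambda>a b. t *\<^sub>R M a b)"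
  by (simp add: vec_eq_iff blockmat_def)

lemma trace_mult_transpose_eigenbasis:
  fixes G :: "real^'n::finite^'n"
  assumes onb: "orthonormal_basis u"
  shows "trace (G ** transpose G) = (\<Sum>p\<in>UNIV. (G *v u p) \<bullet> (G *v u p))"
proof -
  have "trace (G ** transpose G) = (\<Sum>i\<in>UNIV. G $ i \<bullet> G $ i)"
    by (simp add: trace_def matrix_matrix_mult_def transpose_def inner_vec_def)
  also have "\<dots> = (\<Sum>i\<in>UNIV. \<Sum>p\<in>UNIV. (u p \<bullet> G $ i)^2)"
    by (simp add: orthonormal_basis_parseval[OF onb])
  also have "\<dots> = (\<Sum>p\<in>UNIV. \<Sum>i\<in>UNIV. ((G *v u p) $ i)^2)"
    by (subst sum.swap) (simp add: matrix_vector_mult_def inner_vec_def algebra_simps)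
  also have "\<dots> = (\<Sum>p\<in>UNIV. (G *v u p) \<bullet> (G *v u p))"
    by (simp add: inner_vec_def power2_eq_square)
  finally show ?thesis .
qed

lemma trace_block_modes:
  fixes M :: "'b::{finite,zero} \<Rightarrow> 'b \<Rightarrow> real^'n::finite^'n"
    and Mm :: "'n \<Rightarrow> real^'b::{finite,zero}^'b::{finite,zero}"
  assumes onb: "orthonormal_basis u"
    and Mu: "\<And>p a b. M a b *v u p = Mm p $ a $ b *\<^sub>R u p"
    and Bu: "\<And>p a. Bb a *v u p = \<beta> $ a *\<^sub>R u p"
    and Su: "\<And>p. S *v u p = s p *\<^sub>R u p"
  shows "trace (blockrow (\<lambda>a::'b. if a = 0 then S else mat 0) ** mexp (t *\<^sub>R blockmat M) ** blockcol Bb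
            ** transpose (blockcol Bb) ** mexp (t *\<^sub>R transpose (blockmat M))
            ** transpose (blockrow (\<lambda>a::'b. if a = 0 then S else mat 0)))
         = (\<Sum>p\<in>UNIV. (s p * (mexp (t *\<^sub>R Mm p) *v \<beta>) $ 0)^2)"
proof -
  define C where "C = blockrow (\<lambda>a::'b. if a = 0 then S else mat 0)"
  define E where "E = mexp (t *\<^sub>R blockmat M)"
  define B where "B = blockcol Bb"
  define G where "G = C ** E ** B"
  have "C ** E ** B ** transpose B ** mexp (t *\<^sub>R transpose (blockmat M)) ** transpose C
      = G ** transpose G"
    by (simp add: G_def E_def mexp_transpose[of t "blockmat M"] matrix_transpose_mul matrix_mul_assoc)
  moreover have "trace (G ** transpose G) = (\<Sum>p\<in>UNIV. (s p * (mexp (t *\<^sub>R Mm p) *v \<beta>) $ 0)^2)"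
  proof -
    have "G *v u p = ((mexp (t *\<^sub>R Mm p) *v \<beta>) $ 0 * s p) *\<^sub>R u p" for p
    proof -
      have Eu: "E *v kron_vec z (u p) = kron_vec (mexp (t *\<^sub>R Mm p) *v z) (u p)" for z
        unfolding E_def scaleR_blockmat
        by (rule mexp_kron_vec, rule blockmat_kron_vec) (simp add: scaleR_matrix_vector_assoc[symmetric] Mu)
      have "G *v u p = C *v (E *v (B *v u p))" by (simp add: G_def matrix_vector_mul_assoc matrix_mul_assoc)
      also have "B *v u p = kron_vec \<beta> (u p)" unfolding B_def by (rule blockcol_mult_vec) (rule Bu)
      finally show ?thesis by (simp add: Eu C_def blockrow_kron_vec Su)
    qed
    then show ?thesis using onb
      by (simp add: trace_mult_transpose_eigenbasis[OF onb] orthonormal_basis_norm power2_eq_square algebra_simps)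
  qed
  ultimately show ?thesis by (simp add: C_def E_def B_def)
qed

section \<open>Lyapunov functions and improper integrals\<close>

lemma lyapunov_tendsto_zero:
  fixes W W' S :: "real \<Rightarrow> real"
  assumes dW: "\<And>t. (W has_real_derivative W' t) (at t)"
    and S0: "\<And>t. 0 \<le> S t" and SW: "\<And>t. S t \<le> W t" and WC: "\<And>t. W t \<le> C * S t"
    and W'd: "\<And>t. W' t \<le> - d * S t" and d: "d > 0" and C: "C > 0"
  shows "(S \<longlongrightarrow> 0) at_top"
proof -
  define r where "r = d / C"
  have r: "r > 0" using d C by (simp add: r_def)
  have W'r: "W' t \<le> - r * W t" for t
  proof -
    have "r * W t \<le> r * (C * S t)" using WC[of t] r by (simp add: mult_left_mono)
    also have "\<dots> = d * S t" using C by (simp add: r_def)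
    finally show ?thesis using W'd[of t] by simp
  qed
  define h where "h t = W t * exp (r * t)" for t
  have dh: "(h has_real_derivative (W' t + r * W t) * exp (r * t)) (at t)" for t
    unfolding h_def
    by (auto intro!: derivative_eq_intros dW simp: algebra_simps)
  have hle: "h t \<le> h 0" if "t \<ge> 0" for t
  proof (rule DERIV_nonpos_imp_nonincreasing[OF that])
    fix x assume "0 \<le> x" "x \<le> t"
    show "\<exists>y. (h has_real_derivative y) (at x) \<and> y \<le> 0"
      using W'r[of x] by (intro exI[of _ "(W' x + r * W x) * exp (r * x)"] conjI dh)
        (simp add: mult_nonpos_nonneg)
  qed
  have bnd: "S t \<le> W 0 * exp (- r * t)" if "t \<ge> 0" for t
  proof -
    have "W t * exp (r * t) \<le> W 0" using hle[OF that] by (simp add: h_def)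
    then have "W t \<le> W 0 * exp (- r * t)"
      by (simp add: exp_minus field_simps)
    then show ?thesis using SW[of t] by simp
  qed
  have lim: "((\<lambda>t. W 0 * exp (- r * t)) \<longlongrightarrow> 0) at_top" using r by real_asymp
  show ?thesis
  proof (rule tendsto_sandwich[OF _ _ tendsto_const lim])
    show "\<forall>\<^sub>F t in at_top. 0 \<le> S t" using S0 by simp
    show "\<forall>\<^sub>F t in at_top. S t \<le> W 0 * exp (- r * t)"
      using eventually_ge_at_top[of "0::real"]
    proof (rule eventually_mono)
      fix t :: real assume "0 \<le> t" then show "S t \<le> W 0 * exp (- r * t)" by (rule bnd)
    qed
  qed
qed

lemma has_integral_antiderivative_tendsto_zero:
  fixes Q f :: "real \<Rightarrow> real"
  assumes dQ: "\<And>t. (Q has_real_derivative - f t) (at t)"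
    and lim: "(Q \<longlongrightarrow> 0) at_top" and nn: "\<And>t. 0 \<le> f t"
  shows "(f has_integral Q 0) {0..}"
proof -
  have ftc: "(f has_integral Q 0 - Q y) {0..y}" if "0 \<le> y" for y
  proof -
    have "(f has_integral (- Q y) - (- Q 0)) {0..y}"
    proof (rule fundamental_theorem_of_calculus[OF that])
      fix x assume "x \<in> {0..y}"
      have "((\<lambda>t. - Q t) has_real_derivative f x) (at x)"
        using DERIV_minus[OF dQ[of x]] by simp
      then show "((\<lambda>t. - Q t) has_vector_derivative f x) (at x within {0..y})"
        by (simp add: has_real_derivative_iff_has_vector_derivative has_vector_derivative_at_within)
    qed
    then show ?thesis by simp
  qed
  have int: "f integrable_on {0..y}" for y
  proof (cases "0 \<le> y")
    case True then show ?thesis using ftc by blast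
  next
    case False then show ?thesis by (simp add: integrable_on_empty)
  qed
  have "((\<lambda>y. integral {0..y} f) \<longlongrightarrow> Q 0 - 0) at_top"
  proof (rule Lim_transform_eventually)
    show "((\<lambda>y. Q 0 - Q y) \<longlongrightarrow> Q 0 - 0) at_top" by (intro tendsto_intros lim)
    show "\<forall>\<^sub>F y in at_top. Q 0 - Q y = integral {0..y} f"
      using eventually_ge_at_top[of "0::real"]
    proof (rule eventually_mono)
      fix y :: real assume "0 \<le> y"
      then show "Q 0 - Q y = integral {0..y} f" using ftc[of y] by (simp add: integral_unique)
    qed
  qed
  then show ?thesis
    by (intro has_integral_to_inf int) (auto simp: nn)
qed

lemma has_integral_lyapunov:
  fixes Q f W W' S :: "real \<Rightarrow> real"
  assumes dQ: "\<And>t. (Q has_real_derivative - f t) (at t)" and f_nonneg: "\<And>t. 0 \<le> f t"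
    and Q_le: "\<And>t. \<bar>Q t\<bar> \<le> q * S t"
    and dW: "\<And>t. (W has_real_derivative W' t) (at t)"
    and S_nonneg: "\<And>t. 0 \<le> S t" and S_le: "\<And>t. S t \<le> W t" and W_le: "\<And>t. W t \<le> C * S t"
    and W'_le: "\<And>t. W' t \<le> - d * S t" and d: "d > 0" and C: "C > 0"
  shows "(f has_integral Q 0) {0..}"
proof -
  have "(S \<longlongrightarrow> 0) at_top"
    by (rule lyapunov_tendsto_zero[OF dW S_nonneg S_le W_le W'_le d C])
  then have "((\<lambda>t. q * S t) \<longlongrightarrow> 0) at_top" by (rule tendsto_mult_right_zero)
  then have "(Q \<longlongrightarrow> 0) at_top" by (rule Lim_null_comparison[rotated]) (simp add: Q_le)
  then show ?thesis by (rule has_integral_antiderivative_tendsto_zero[OF dQ _ f_nonneg])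
qed

lemma abs_cross_term_le: "\<bar>2 * p * x * y\<bar> \<le> \<bar>p\<bar> * (x^2 + (y::real)^2)"
proof -
  have "2 * \<bar>x\<bar> * \<bar>y\<bar> \<le> \<bar>x\<bar>^2 + \<bar>y\<bar>^2" by (rule sum_squares_bound)
  then have "\<bar>p\<bar> * (2 * \<bar>x\<bar> * \<bar>y\<bar>) \<le> \<bar>p\<bar> * (x^2 + y^2)"
    by (intro mult_left_mono) auto
  then show ?thesis by (simp add: abs_mult algebra_simps)
qed

lemma abs_quadratic_form_3_le:
  fixes x y z :: real
  shows "\<bar>p11 * x^2 + p22 * y^2 + p33 * z^2 + 2 * p12 * x * y + 2 * p13 * x * z + 2 * p23 * y * z\<bar>
    \<le> (\<bar>p11\<bar> + \<bar>p22\<bar> + \<bar>p33\<bar> + \<bar>p12\<bar> + \<bar>p13\<bar> + \<bar>p23\<bar>) * (x^2 + y^2 + z^2)"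
proof -
  define S where "S = x^2 + y^2 + z^2"
  have sq: "\<bar>p * v^2\<bar> \<le> \<bar>p\<bar> * S" if "v^2 \<le> S" for p v
    using that by (simp add: abs_mult mult_left_mono)
  have cr: "\<bar>2 * p * v * w\<bar> \<le> \<bar>p\<bar> * S" if "v^2 + w^2 \<le> S" for p v w
    using abs_cross_term_le[of p v w] that by (meson abs_ge_zero mult_left_mono order_trans)
  have "\<bar>p11 * x^2\<bar> \<le> \<bar>p11\<bar> * S" "\<bar>p22 * y^2\<bar> \<le> \<bar>p22\<bar> * S" "\<bar>p33 * z^2\<bar> \<le> \<bar>p33\<bar> * S"
    by (rule sq, simp add: S_def)+
  moreover have "\<bar>2 * p12 * x * y\<bar> \<le> \<bar>p12\<bar> * S" "\<bar>2 * p13 * x * z\<bar> \<le> \<bar>p13\<bar> * S"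
      "\<bar>2 * p23 * y * z\<bar> \<le> \<bar>p23\<bar> * S"
    by (rule cr, simp add: S_def)+
  ultimately show ?thesis
    unfolding S_def[symmetric] abs_le_iff by (simp only: distrib_right) linarith
qed

section \<open>Output energy of the second- and third-order modes\<close>

lemma second_order_mode_integral:
  fixes th om :: "real \<Rightarrow> real" and a b :: real
  assumes a: "a > 0" and b: "b > 0"
    and dth: "\<And>t. (th has_real_derivative om t) (at t)"
    and dom: "\<And>t. (om has_real_derivative (- a * th t - b * om t)) (at t)"
  shows "((\<lambda>t. (th t)^2) has_integral
           ((b / (2*a) + 1 / (2*b)) * (th 0)^2 + 2 * (1/(2*a)) * th 0 * om 0 + (1/(2*a*b)) * (om 0)^2)) {0..}"
proof -
  \<comment> \<open>P solves the Lyapunov equation A^T P + P A = - e1 e1^T, so that Q' = - th^2.\<close>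
  define p11 where "p11 = b / (2*a) + 1 / (2*b)"
  define p12 where "p12 = 1 / (2*a)"
  define p22 where "p22 = 1 / (2*a*b)"
  define Q where "Q t = p11 * (th t)^2 + 2 * p12 * th t * om t + p22 * (om t)^2" for t
  define E where "E t = a * (th t)^2 + (om t)^2" for t
  define S where "S t = (th t)^2 + (om t)^2" for t
  have e1: "-2 * a * p12 = -1" using a by (simp add: p12_def)
  have e2: "2 * p12 - 2 * b * p22 = 0" using a b by (simp add: p12_def p22_def field_simps)
  have e3: "2 * p11 - 2 * a * p22 - 2 * b * p12 = 0" using a b by (simp add: p11_def p12_def p22_def field_simps)
  have dQ: "(Q has_real_derivative (- ((th t)^2))) (at t)" for t
  proof -
    have "(Q has_real_derivative
        p11 * (2 * th t * om t) + 2 * p12 * (om t * om t + th t * (- a * th t - b * om t))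
        + p22 * (2 * om t * (- a * th t - b * om t))) (at t)"
      unfolding Q_def by (auto intro!: derivative_eq_intros dth dom simp: algebra_simps)
    moreover have "p11 * (2 * th t * om t) + 2 * p12 * (om t * om t + th t * (- a * th t - b * om t))
        + p22 * (2 * om t * (- a * th t - b * om t))
      = (-2 * a * p12) * (th t)^2 + (2 * p12 - 2 * b * p22) * (om t)^2
        + (2 * p11 - 2 * a * p22 - 2 * b * p12) * (th t * om t)"
      by (simp add: algebra_simps power2_eq_square)
    ultimately show ?thesis using e1 e2 e3 by simp
  qed
  have dE: "(E has_real_derivative (- 2 * b * (om t)^2)) (at t)" for t
  proof -
    have "(E has_real_derivative a * (2 * th t * om t) + 2 * om t * (- a * th t - b * om t)) (at t)"
      unfolding E_def by (auto intro!: derivative_eq_intros dth dom simp: algebra_simps)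
    then show ?thesis by (simp add: algebra_simps power2_eq_square)
  qed
  have p11: "p11 > 0" and p12: "p12 > 0" and p22: "p22 > 0" using a b
    by (auto simp: p11_def p12_def p22_def intro!: add_pos_pos divide_pos_pos)
  have det: "p11 * p22 - p12^2 > 0"
    using a b by (simp add: p11_def p12_def p22_def field_simps power2_eq_square)
  have Qnn: "Q t \<ge> 0" for t
  proof -
    have "p11 * Q t = (p11 * th t + p12 * om t)^2 + (p11 * p22 - p12^2) * (om t)^2"
      by (simp add: Q_def power2_eq_square algebra_simps)
    also have "\<dots> \<ge> 0" using det by (intro add_nonneg_nonneg mult_nonneg_nonneg) auto
    finally show ?thesis using p11 by (simp add: zero_le_mult_iff)
  qed
  define qB where "qB = p11 + p12 + p22"
  have Qle: "Q t \<le> qB * S t" for t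
  proof -
    have "p12 * (2 * th t * om t) \<le> p12 * ((th t)^2 + (om t)^2)"
      by (rule mult_left_mono[OF sum_squares_bound]) (use p12 in simp)
    then have "2 * p12 * th t * om t \<le> p12 * ((th t)^2 + (om t)^2)" by (simp add: algebra_simps)
    moreover have "p11 * (om t)^2 \<ge> 0" "p22 * (th t)^2 \<ge> 0" using p11 p22 by auto
    ultimately show ?thesis
      by (simp add: Q_def S_def qB_def algebra_simps)
  qed
  define K where "K = max 1 (1/a)"
  have K: "K \<ge> 1" "K * a \<ge> 1" using a by (auto simp: K_def max_def field_simps)
  define W where "W t = Q t + K * E t" for t
  define d where "d = min 1 (2 * K * b)"
  have d: "d > 0" using K b by (simp add: d_def)
  define C where "C = qB + K * (a + 1)"
  have C: "C > 0" using p11 p12 p22 K a by (simp add: C_def qB_def add_pos_nonneg)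
  have "((\<lambda>t. (th t)^2) has_integral Q 0) {0..}"
  proof (rule has_integral_lyapunov[OF dQ, where q = qB and S = S and W = W and C = C and d = d])
    show "\<bar>Q t\<bar> \<le> qB * S t" for t using Qnn[of t] Qle[of t] by simp
    show "(W has_real_derivative (- ((th t)^2) + K * (- 2 * b * (om t)^2))) (at t)" for t
      unfolding W_def by (intro DERIV_add dQ DERIV_cmult dE)
    show "0 \<le> S t" for t by (simp add: S_def)
    show "S t \<le> W t" for t
    proof -
      have "(th t)^2 \<le> (K * a) * (th t)^2" using K by (simp add: mult_le_cancel_right1)
      moreover have "(om t)^2 \<le> K * (om t)^2" using K by (simp add: mult_le_cancel_right1)
      ultimately show ?thesis using Qnn[of t] by (simp add: S_def W_def E_def algebra_simps)
    qed
    show "W t \<le> C * S t" for t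
      using Qle[of t] K a by (simp add: W_def E_def S_def C_def algebra_simps)
        (smt (verit) mult_left_mono zero_le_power2 mult_nonneg_nonneg)
    show "- ((th t)^2) + K * (- 2 * b * (om t)^2) \<le> - d * S t" for t
    proof -
      have "d * (th t)^2 \<le> 1 * (th t)^2" by (intro mult_right_mono) (auto simp: d_def)
      moreover have "d * (om t)^2 \<le> (2 * K * b) * (om t)^2" by (intro mult_right_mono) (auto simp: d_def)
      ultimately show ?thesis by (simp add: S_def algebra_simps)
    qed
  qed (use d C in auto)
  then show ?thesis by (simp add: Q_def p11_def p12_def p22_def)
qed

lemma third_order_mode_integral:
  fixes th om Om :: "real \<Rightarrow> real" and a b c d :: real
  assumes a: "a > 0" and b: "b > 0" and c: "c > 0" and d: "d > 0"
    and dth: "\<And>t. (th has_real_derivative om t) (at t)"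
    and dom: "\<And>t. (om has_real_derivative (- a * th t - b * om t + b * Om t)) (at t)"
    and dOm: "\<And>t. (Om has_real_derivative (- c * om t - d * Om t)) (at t)"
    and init: "th 0 = 0" "Om 0 = 0"
  shows "((\<lambda>t. (th t)^2) has_integral
           ((om 0)^2 * (1 / (2*a*b)) * (a + d*(b+d)) / (a + (b+d)*(c+d)))) {0..}"
proof -
  \<comment> \<open>P solves the Lyapunov equation A^T P + P A = - e1 e1^T, so that Q' = - th^2.\<close>
  define \<Delta> where "\<Delta> = a + (b+d)*(c+d)"
  have \<Delta>: "\<Delta> > 0" using a b c d by (simp add: \<Delta>_def add_pos_nonneg)
  define p12 where "p12 = 1 / (2*a)"
  define p23 where "p23 = (b+d) * p12 / \<Delta>"
  define p13 where "p13 = (b * p12 - a * p23) / d"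
  define p22 where "p22 = (p12 - c * p23) / b"
  define p33 where "p33 = b * p23 / d"
  define p11 where "p11 = a * p22 + b * p12 + c * p13"
  define Q where "Q t = p11 * (th t)^2 + p22 * (om t)^2 + p33 * (Om t)^2
     + 2 * p12 * th t * om t + 2 * p13 * th t * Om t + 2 * p23 * om t * Om t" for t
  define E where "E t = a * (th t)^2 + (om t)^2 + (b/c) * (Om t)^2" for t
  define S where "S t = (th t)^2 + (om t)^2 + (Om t)^2" for t
  have e1: "-2 * a * p12 = -1" using a by (simp add: p12_def)
  have e2: "2 * (- b * p22 + p12 - c * p23) = 0" using b by (simp add: p22_def field_simps)
  have e3: "2 * (- d * p33 + b * p23) = 0" using d by (simp add: p33_def field_simps)
  have e4: "2 * (p11 - a * p22 - b * p12 - c * p13) = 0" by (simp add: p11_def)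
  have e5: "2 * (b * p12 - d * p13 - a * p23) = 0" using d by (simp add: p13_def field_simps)
  have e6: "2 * (b * p22 - c * p33 + p13 - d * p23 - b * p23) = 0"
  proof -
    have "d * (b * p22 - c * p33 + p13 - d * p23 - b * p23) = (b + d) * p12 - p23 * \<Delta>"
      using b d by (simp add: p22_def p33_def p13_def \<Delta>_def field_simps)
    also have "\<dots> = 0" using \<Delta> by (simp add: p23_def)
    finally show ?thesis using d by simp
  qed
  have dQ: "(Q has_real_derivative (- ((th t)^2))) (at t)" for t
  proof -
    let ?x = "th t" and ?y = "om t" and ?z = "Om t"
    let ?y' = "- a * th t - b * om t + b * Om t" and ?z' = "- c * om t - d * Om t"
    have "(Q has_real_derivative
        p11 * (2 * ?x * ?y) + p22 * (2 * ?y * ?y') + p33 * (2 * ?z * ?z')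
        + 2 * p12 * (?y * ?y + ?x * ?y') + 2 * p13 * (?y * ?z + ?x * ?z')
        + 2 * p23 * (?y' * ?z + ?y * ?z')) (at t)"
      unfolding Q_def by (auto intro!: derivative_eq_intros dth dom dOm simp: algebra_simps)
    moreover have "p11 * (2 * ?x * ?y) + p22 * (2 * ?y * ?y') + p33 * (2 * ?z * ?z')
        + 2 * p12 * (?y * ?y + ?x * ?y') + 2 * p13 * (?y * ?z + ?x * ?z')
        + 2 * p23 * (?y' * ?z + ?y * ?z')
      = (-2 * a * p12) * ?x^2 + (2 * (- b * p22 + p12 - c * p23)) * ?y^2
        + (2 * (- d * p33 + b * p23)) * ?z^2 + (2 * (p11 - a * p22 - b * p12 - c * p13)) * (?x * ?y)
        + (2 * (b * p12 - d * p13 - a * p23)) * (?x * ?z)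
        + (2 * (b * p22 - c * p33 + p13 - d * p23 - b * p23)) * (?y * ?z)"
      by (simp add: algebra_simps power2_eq_square)
    ultimately show ?thesis by (simp only: e1 e2 e3 e4 e5 e6) simp
  qed
  have dE: "(E has_real_derivative (- 2 * b * (om t)^2 - 2 * (b * d / c) * (Om t)^2)) (at t)" for t
  proof -
    define bc where "bc = b / c"
    have Ee: "E = (\<lambda>t. a * (th t)^2 + (om t)^2 + bc * (Om t)^2)" by (simp add: E_def bc_def fun_eq_iff)
    have "(E has_real_derivative a * (2 * th t * om t) + 2 * om t * (- a * th t - b * om t + b * Om t)
        + bc * (2 * Om t * (- c * om t - d * Om t))) (at t)"
      unfolding Ee by (auto intro!: derivative_eq_intros dth dom dOm simp: algebra_simps)
    moreover have "a * (2 * th t * om t) + 2 * om t * (- a * th t - b * om t + b * Om t)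
        + bc * (2 * Om t * (- c * om t - d * Om t)) = - 2 * b * (om t)^2 - 2 * (b * d / c) * (Om t)^2"
      using c by (simp add: bc_def field_simps power2_eq_square)
    ultimately show ?thesis by simp
  qed
  define qB where "qB = \<bar>p11\<bar> + \<bar>p22\<bar> + \<bar>p33\<bar> + \<bar>p12\<bar> + \<bar>p13\<bar> + \<bar>p23\<bar>"
  have qB: "qB \<ge> 0" by (simp add: qB_def)
  have Qb: "\<bar>Q t\<bar> \<le> qB * S t" for t
    unfolding Q_def S_def qB_def by (rule abs_quadratic_form_3_le)
  define K0 where "K0 = max 1 (max (1/a) (c/b))"
  have K0: "K0 \<ge> 1" "K0 * a \<ge> 1" "K0 * (b/c) \<ge> 1"
  proof -
    show "K0 \<ge> 1" by (simp add: K0_def)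
    have "(1/a) * a \<le> K0 * a" using a by (intro mult_right_mono) (auto simp: K0_def)
    then show "K0 * a \<ge> 1" using a by simp
    have "(c/b) * (b/c) \<le> K0 * (b/c)" using b c by (intro mult_right_mono) (auto simp: K0_def)
    then show "K0 * (b/c) \<ge> 1" using b c by simp
  qed
  define K where "K = (qB + 1) * K0"
  have Kpos: "K > 0" using K0 qB by (simp add: K_def)
  define W where "W t = Q t + K * E t" for t
  define d0 where "d0 = min 1 (min (2 * K * b) (2 * K * (b * d / c)))"
  have d0: "d0 > 0" using Kpos b c d by (simp add: d0_def)
  define C where "C = qB + K * (a + 1 + b/c)"
  have C: "C > 0" using qB Kpos a b c by (simp add: C_def add_nonneg_pos)
  have KE: "(qB + 1) * S t \<le> K * E t" for t
  proof -
    have "(qB + 1) * (th t)^2 \<le> (qB + 1) * ((K0 * a) * (th t)^2)"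
      using K0 qB by (intro mult_left_mono) (auto simp: mult_le_cancel_right1)
    moreover have "(qB + 1) * (om t)^2 \<le> (qB + 1) * (K0 * (om t)^2)"
      using K0 qB by (intro mult_left_mono) (auto simp: mult_le_cancel_right1)
    moreover have "(Om t)^2 \<le> (K0 * (b/c)) * (Om t)^2"
      using mult_right_mono[OF K0(3), of "(Om t)^2"] by simp
    then have "(qB + 1) * (Om t)^2 \<le> (qB + 1) * ((K0 * (b/c)) * (Om t)^2)"
      by (rule mult_left_mono) (use qB in simp)
    ultimately show ?thesis by (simp add: S_def E_def K_def algebra_simps)
  qed
  have EC: "K * E t \<le> K * (a + 1 + b/c) * S t" for t
  proof -
    have "E t \<le> (a + 1 + b/c) * S t"
    proof -
      have h1: "a * (th t)^2 \<le> a * S t" using a by (intro mult_left_mono) (auto simp: S_def)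
      have h2: "(om t)^2 \<le> S t" by (simp add: S_def)
      have h3: "(b/c) * (Om t)^2 \<le> (b/c) * S t" using b c by (intro mult_left_mono) (auto simp: S_def)
      have "E t \<le> a * S t + S t + (b/c) * S t" unfolding E_def using h1 h2 h3 by linarith
      then show ?thesis by (simp add: algebra_simps)
    qed
    then show ?thesis using Kpos by (simp add: mult_left_mono mult.assoc)
  qed
  have "((\<lambda>t. (th t)^2) has_integral Q 0) {0..}"
  proof (rule has_integral_lyapunov[OF dQ, where q = qB and S = S and W = W and C = C and d = d0])
    show "\<bar>Q t\<bar> \<le> qB * S t" for t by (rule Qb)
    show "(W has_real_derivative (- ((th t)^2) + K * (- 2 * b * (om t)^2 - 2 * (b * d / c) * (Om t)^2))) (at t)" for t
      unfolding W_def by (intro DERIV_add dQ DERIV_cmult dE)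
    show "0 \<le> S t" for t by (simp add: S_def)
    show "S t \<le> W t" for t using KE[of t] Qb[of t, unfolded abs_le_iff] by (simp add: W_def algebra_simps)
    show "W t \<le> C * S t" for t using EC[of t] Qb[of t, unfolded abs_le_iff] by (simp add: W_def C_def algebra_simps)
    show "- ((th t)^2) + K * (- 2 * b * (om t)^2 - 2 * (b * d / c) * (Om t)^2) \<le> - d0 * S t" for t
    proof -
      have "d0 * (th t)^2 \<le> 1 * (th t)^2" by (intro mult_right_mono) (auto simp: d0_def)
      moreover have "d0 * (om t)^2 \<le> (2 * K * b) * (om t)^2" by (intro mult_right_mono) (auto simp: d0_def)
      moreover have "d0 * (Om t)^2 \<le> (2 * K * (b * d / c)) * (Om t)^2" by (intro mult_right_mono) (auto simp: d0_def)
      ultimately show ?thesis by (simp add: S_def algebra_simps)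
    qed
  qed (use d0 C in auto)
  moreover have "Q 0 = (om 0)^2 * (1 / (2*a*b)) * (a + d*(b+d)) / (a + (b+d)*(c+d))"
  proof -
    have "Q 0 = p22 * (om 0)^2" using init by (simp add: Q_def)
    moreover have "p22 = (1 / (2*a*b)) * (a + d*(b+d)) / (a + (b+d)*(c+d))"
    proof -
      have hD: "\<Delta> - c*(b+d) = a + d*(b+d)" by (simp add: \<Delta>_def algebra_simps)
      have "p12 - c * p23 = p12 * (\<Delta> - c*(b+d)) / \<Delta>"
        using \<Delta> by (simp add: p23_def field_simps)
      then have "p22 = p12 * (a + d*(b+d)) / \<Delta> / b" by (simp add: p22_def hD)
      then show ?thesis using a b by (simp add: p12_def \<Delta>_def field_simps)
    qed
    ultimately show ?thesis by simp
  qed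
  ultimately show ?thesis by simp
qed

section \<open>Modal decomposition of the H2 norms\<close>

lemma sum_UNIV_2: "(\<Sum>b\<in>(UNIV::2 set). f b) = f 0 + (f 1 :: real)"
proof -
  have "x \<in> {0,1}" for x :: 2 using exhaust_2[of x] by auto
  then have "(UNIV::2 set) = {0,1}" by blast
  then have "sum f UNIV = sum f {0,1}" by simp
  then show ?thesis by simp
qed

lemma sum_UNIV_3: "(\<Sum>b\<in>(UNIV::3 set). f b) = f 0 + f 1 + (f 2 :: real)"
proof -
  have "(3::3) = 0" by simp
  then have "x \<in> {0,1,2}" for x :: 3 using exhaust_3[of x] by auto
  then have "(UNIV::3 set) = {0,1,2}" by blast
  then have "sum f UNIV = sum f {0,1,2}" by simp
  then show ?thesis by (simp add: add.assoc)
qed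

definition dapi_mode_matrix :: "real \<Rightarrow> real \<Rightarrow> real \<Rightarrow> real \<Rightarrow> real \<Rightarrow> real^3^3" where
  "dapi_mode_matrix m \<tau> \<gamma> k \<mu> = (\<chi> a b.
     if a = 0 then (if b = 1 then 1 else 0) else
     if a = 1 then (if b = 0 then (- m / \<tau>) * \<mu> else if b = 1 then - 1 / \<tau> else 1 / \<tau>) else
     (if b = 0 then 0 else if b = 1 then - 1 / k else (- \<gamma> / k) * \<mu>))"

definition dapi_mode_input :: "real \<Rightarrow> real^3" where
  "dapi_mode_input \<tau> = (\<chi> a. if a = 1 then 1 / \<tau> else 0)"

definition std_mode_matrix :: "real \<Rightarrow> real \<Rightarrow> real \<Rightarrow> real^2^2" where
  "std_mode_matrix m \<tau> \<mu> = (\<chi> a b.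
     if a = 0 \<and> b = 0 then 0 else
     if a = 0 \<and> b = 1 then 1 else
     if a = 1 \<and> b = 0 then (- m / \<tau>) * \<mu> else - 1 / \<tau>)"

definition std_mode_input :: "real \<Rightarrow> real^2" where
  "std_mode_input \<tau> = (\<chi> a. if a = 0 then 0 else 1 / \<tau>)"

text \<open>
  The summand of the closed form. At x = 0 the division by zero makes its value 1, so the
  mode of the zero eigenvalue has to be excluded explicitly.
\<close>

definition dapi_gain :: "real \<Rightarrow> real \<Rightarrow> real \<Rightarrow> real \<Rightarrow> real \<Rightarrow> real" where
  "dapi_gain m \<tau> \<gamma> k x = 1 / (1 + (\<gamma> * \<tau> * x + k) / (\<gamma> * x * (\<gamma> * \<tau> * x + k) + k\<^sup>2 * m * x))"

lemma dapi_mode_integral_closed_form: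
  fixes \<mu> m \<tau> \<gamma> k :: real
  assumes mu: "\<mu> > 0" and m: "m > 0" and tau: "\<tau> > 0" and g: "\<gamma> > 0" and k: "k > 0"
  shows "(1/\<tau>)^2 * (1 / (2*(m / \<tau> * \<mu>)*(1 / \<tau>))) * (m / \<tau> * \<mu> + \<gamma> / k * \<mu>*(1 / \<tau>+\<gamma> / k * \<mu>))
            / (m / \<tau> * \<mu> + (1 / \<tau>+\<gamma> / k * \<mu>)*(1 / k+\<gamma> / k * \<mu>))
       = 1 / (2 * m * \<mu>) * dapi_gain m \<tau> \<gamma> k \<mu>"
proof -
  define P where "P = \<gamma> * \<tau> * \<mu> + k"
  define D where "D = \<gamma> * \<mu> * P + k\<^sup>2 * m * \<mu>"
  have P: "P > 0" using assms by (simp add: P_def add_pos_pos)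
  have D: "D > 0" using assms P by (simp add: D_def add_pos_pos)
  have num: "m / \<tau> * \<mu> + \<gamma> / k * \<mu>*(1 / \<tau>+\<gamma> / k * \<mu>) = D / (k^2 * \<tau>)"
    using k tau by (simp add: D_def P_def field_simps power2_eq_square)
  have den: "m / \<tau> * \<mu> + (1 / \<tau>+\<gamma> / k * \<mu>)*(1 / k+\<gamma> / k * \<mu>) = (D + P) / (k^2 * \<tau>)"
    using k tau by (simp add: D_def P_def field_simps power2_eq_square)
  have pre: "(1/\<tau>)^2 * (1 / (2*(m / \<tau> * \<mu>)*(1 / \<tau>))) = 1 / (2 * m * \<mu>)"
    using tau m mu by (simp add: field_simps power2_eq_square)
  have gain: "dapi_gain m \<tau> \<gamma> k \<mu> = D / (D + P)"
    using D P by (simp add: dapi_gain_def flip: P_def D_def) (simp add: field_simps)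
  have "1 / (2 * m * \<mu>) * (D / (k^2 * \<tau>)) / ((D + P) / (k^2 * \<tau>)) = 1 / (2 * m * \<mu>) * (D / (D + P))"
    using D P k tau by (simp add: field_simps)
  then show ?thesis by (simp only: pre num den gain)
qed

lemma dapi_mode_has_integral:
  assumes mu: "\<mu> > 0" and m: "m > 0" and tau: "\<tau> > 0" and g: "\<gamma> > 0" and k: "k > 0"
  shows "((\<lambda>t. ((mexp (t *\<^sub>R dapi_mode_matrix m \<tau> \<gamma> k \<mu>) *v dapi_mode_input \<tau>) $ 0)^2) has_integral
           1 / (2 * m * \<mu>) * dapi_gain m \<tau> \<gamma> k \<mu>) {0..}"
proof -
  define a where "a = m / \<tau> * \<mu>"
  define b where "b = 1 / \<tau>"
  define c where "c = 1 / k"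
  define d where "d = \<gamma> / k * \<mu>"
  define y where "y t = mexp (t *\<^sub>R dapi_mode_matrix m \<tau> \<gamma> k \<mu>) *v dapi_mode_input \<tau>" for t
  have dy: "((\<lambda>t. y t $ i) has_real_derivative (dapi_mode_matrix m \<tau> \<gamma> k \<mu> *v y t) $ i) (at t)" for i t
    unfolding y_def by (rule has_real_derivative_mexp_mult_vec)
  have my: "(dapi_mode_matrix m \<tau> \<gamma> k \<mu> *v v) $ 0 = v $ 1"
    "(dapi_mode_matrix m \<tau> \<gamma> k \<mu> *v v) $ 1 = - a * v $ 0 - b * v $ 1 + b * v $ 2"
    "(dapi_mode_matrix m \<tau> \<gamma> k \<mu> *v v) $ 2 = - c * v $ 1 - d * v $ 2" for v
    by (simp_all add: matrix_vector_mult_def dapi_mode_matrix_def sum_UNIV_3 a_def b_def c_def d_def algebra_simps)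
  have y0: "y 0 = dapi_mode_input \<tau>" using mexp_zero[of "dapi_mode_matrix m \<tau> \<gamma> k \<mu>"] by (simp add: y_def)
  have "((\<lambda>t. (y t $ 0)^2) has_integral
           ((y 0 $ 1)^2 * (1 / (2*a*b)) * (a + d*(b+d)) / (a + (b+d)*(c+d)))) {0..}"
  proof (rule third_order_mode_integral)
    show "a > 0" "b > 0" "c > 0" "d > 0" using mu m tau g k by (simp_all add: a_def b_def c_def d_def)
    show "((\<lambda>t. y t $ 0) has_real_derivative y t $ 1) (at t)" for t using dy[of 0 t] my by simp
    show "((\<lambda>t. y t $ 1) has_real_derivative - a * y t $ 0 - b * y t $ 1 + b * y t $ 2) (at t)" for t
      using dy[of 1 t] my by simp
    show "((\<lambda>t. y t $ 2) has_real_derivative - c * y t $ 1 - d * y t $ 2) (at t)" for t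
      using dy[of 2 t] my by simp
    show "y 0 $ 0 = 0" "y 0 $ 2 = 0" using y0 by (simp_all add: dapi_mode_input_def)
  qed
  then show ?thesis
    using y0 dapi_mode_integral_closed_form[OF assms]
    by (simp add: y_def dapi_mode_input_def a_def b_def c_def d_def)
qed

lemma std_mode_has_integral:
  assumes mu: "\<mu> > 0" and m: "m > 0" and tau: "\<tau> > 0"
  shows "((\<lambda>t. ((mexp (t *\<^sub>R std_mode_matrix m \<tau> \<mu>) *v std_mode_input \<tau>) $ 0)^2) has_integral (1 / (2 * m * \<mu>))) {0..}"
proof -
  define a where "a = m / \<tau> * \<mu>"
  define b where "b = 1 / \<tau>"
  define y where "y t = mexp (t *\<^sub>R std_mode_matrix m \<tau> \<mu>) *v std_mode_input \<tau>" for t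
  have dy: "((\<lambda>t. y t $ i) has_real_derivative (std_mode_matrix m \<tau> \<mu> *v y t) $ i) (at t)" for i t
    unfolding y_def by (rule has_real_derivative_mexp_mult_vec)
  have my: "(std_mode_matrix m \<tau> \<mu> *v v) $ 0 = v $ 1"
    "(std_mode_matrix m \<tau> \<mu> *v v) $ 1 = - a * v $ 0 - b * v $ 1" for v
    by (simp_all add: matrix_vector_mult_def std_mode_matrix_def sum_UNIV_2 a_def b_def algebra_simps)
  have y0: "y 0 = std_mode_input \<tau>" using mexp_zero[of "std_mode_matrix m \<tau> \<mu>"] by (simp add: y_def)
  have "((\<lambda>t. (y t $ 0)^2) has_integral
           ((b / (2*a) + 1 / (2*b)) * (y 0 $ 0)^2 + 2 * (1/(2*a)) * y 0 $ 0 * y 0 $ 1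
             + (1/(2*a*b)) * (y 0 $ 1)^2)) {0..}"
  proof (rule second_order_mode_integral)
    show "a > 0" "b > 0" using mu m tau by (simp_all add: a_def b_def)
    show "((\<lambda>t. y t $ 0) has_real_derivative y t $ 1) (at t)" for t using dy[of 0 t] my by simp
    show "((\<lambda>t. y t $ 1) has_real_derivative - a * y t $ 0 - b * y t $ 1) (at t)" for t
      using dy[of 1 t] my by simp
  qed
  moreover have "(b / (2*a) + 1 / (2*b)) * (y 0 $ 0)^2 + 2 * (1/(2*a)) * y 0 $ 0 * y 0 $ 1
             + (1/(2*a*b)) * (y 0 $ 1)^2 = 1 / (2 * m * \<mu>)"
    using y0 mu m tau by (simp add: std_mode_input_def a_def b_def field_simps power2_eq_square)
  ultimately show ?thesis by (simp add: y_def)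
qed

lemma h2sq_block_modes:
  fixes M :: "'b::{finite,zero} \<Rightarrow> 'b \<Rightarrow> real^'n::finite^'n"
    and Mm :: "'n \<Rightarrow> real^'b::{finite,zero}^'b::{finite,zero}"
  assumes onb: "orthonormal_basis u"
    and Mu: "\<And>p a b. M a b *v u p = Mm p $ a $ b *\<^sub>R u p"
    and Bu: "\<And>p a. Bb a *v u p = \<beta> $ a *\<^sub>R u p"
    and Su: "\<And>p. S *v u p = s p *\<^sub>R u p"
    and mode: "\<And>p. s p \<noteq> 0 \<Longrightarrow>
                 ((\<lambda>t. ((mexp (t *\<^sub>R Mm p) *v \<beta>) $ 0)^2) has_integral I p) {0..}"
  shows "h2sq (blockmat M) (blockcol Bb) (blockrow (\<lambda>a::'b. if a = 0 then S else mat 0))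
           = (\<Sum>p\<in>UNIV. (s p)^2 * I p)"
proof -
  have weighted_mode: "((\<lambda>t. (s p * (mexp (t *\<^sub>R Mm p) *v \<beta>) $ 0)^2) has_integral (s p)^2 * I p) {0..}"
    for p
  proof (cases "s p = 0")
    case False
    from has_integral_cmul[OF mode[OF False], of "(s p)^2"] show ?thesis
      by (simp add: power_mult_distrib)
  qed simp
  have "((\<lambda>t. trace (blockrow (\<lambda>a::'b. if a = 0 then S else mat 0) ** mexp (t *\<^sub>R blockmat M)
            ** blockcol Bb ** transpose (blockcol Bb) ** mexp (t *\<^sub>R transpose (blockmat M))
            ** transpose (blockrow (\<lambda>a::'b. if a = 0 then S else mat 0))))
          has_integral (\<Sum>p\<in>UNIV. (s p)^2 * I p)) {0..}"
    unfolding trace_block_modes[OF onb Mu Bu Su] by (rule has_integral_sum) (auto intro: weighted_mode)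
  then show ?thesis unfolding h2sq_def by (rule integral_unique)
qed

lemma msqrt_scaleR_eigenbasis:
  fixes L :: "real^'n^'n"
  assumes onb: "orthonormal_basis u" and eig: "\<And>p. L *v u p = \<mu> p *\<^sub>R u p"
    and \<mu>_nonneg: "\<And>p. 0 \<le> \<mu> p" and \<alpha>: "\<alpha> > 0"
  shows "msqrt (\<alpha> *\<^sub>R L) *v u p = sqrt (\<alpha> * \<mu> p) *\<^sub>R u p"
proof (rule msqrt_eigenbasis[OF onb, of "\<alpha> *\<^sub>R L" "\<lambda>p. \<alpha> * \<mu> p"])
  show "(\<alpha> *\<^sub>R L) *v u q = (\<alpha> * \<mu> q) *\<^sub>R u q" for q
    by (simp add: scaleR_matrix_vector_assoc[symmetric] eig)
  show "0 \<le> \<alpha> * \<mu> q" for q using \<alpha> \<mu>_nonneg by simp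
qed

lemma H2sq_dapi_eigenbasis:
  fixes L :: "real^'n^'n"
  assumes onb: "orthonormal_basis u" and eig: "\<And>p. L *v u p = \<mu> p *\<^sub>R u p"
    and \<mu>_nonneg: "\<And>p. 0 \<le> \<mu> p"
    and pos: "\<alpha> > 0" "m > 0" "\<tau> > 0" "\<gamma> > 0" "k > 0"
  shows "H2sq_dapi L \<alpha> m \<tau> \<gamma> k
           = (\<Sum>p\<in>UNIV. if \<mu> p = 0 then 0 else \<alpha> / (2 * m) * dapi_gain m \<tau> \<gamma> k (\<mu> p))"
proof -
  have "H2sq_dapi L \<alpha> m \<tau> \<gamma> k
          = (\<Sum>p\<in>UNIV. (sqrt (\<alpha> * \<mu> p))^2 * (1 / (2 * m * \<mu> p) * dapi_gain m \<tau> \<gamma> k (\<mu> p)))"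
    unfolding H2sq_dapi_def A_dapi_def B_dapi_def C_dapi_def
  proof (rule h2sq_block_modes[where Mm = "\<lambda>p. dapi_mode_matrix m \<tau> \<gamma> k (\<mu> p)"
        and \<beta> = "dapi_mode_input \<tau>" and s = "\<lambda>p. sqrt (\<alpha> * \<mu> p)"])
    show "orthonormal_basis u" by (rule onb)
    show "msqrt (\<alpha> *\<^sub>R L) *v u p = sqrt (\<alpha> * \<mu> p) *\<^sub>R u p" for p
      by (rule msqrt_scaleR_eigenbasis[OF onb eig \<mu>_nonneg pos(1)])
    show "(if a = 1 then (1 / \<tau>) *\<^sub>R mat 1 else mat 0) *v u p = dapi_mode_input \<tau> $ a *\<^sub>R u p" for p a
      by (simp add: dapi_mode_input_def scaleR_matrix_vector_assoc[symmetric])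
    show "(if a = 0 then if b = 1 then mat 1 else mat 0
           else if a = 1 then if b = 0 then (- m / \<tau>) *\<^sub>R L else if b = 1 then (- 1 / \<tau>) *\<^sub>R mat 1 else (1 / \<tau>) *\<^sub>R mat 1
           else if b = 0 then mat 0 else if b = 1 then (- 1 / k) *\<^sub>R mat 1 else (- \<gamma> / k) *\<^sub>R L) *v u p
        = dapi_mode_matrix m \<tau> \<gamma> k (\<mu> p) $ a $ b *\<^sub>R u p" for p a b
      by (simp add: dapi_mode_matrix_def scaleR_matrix_vector_assoc[symmetric] eig uminus_matrix_vector_mult)
    show "((\<lambda>t. ((mexp (t *\<^sub>R dapi_mode_matrix m \<tau> \<gamma> k (\<mu> p)) *v dapi_mode_input \<tau>) $ 0)^2)
            has_integral 1 / (2 * m * \<mu> p) * dapi_gain m \<tau> \<gamma> k (\<mu> p)) {0..}"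
      if "sqrt (\<alpha> * \<mu> p) \<noteq> 0" for p
      using that \<mu>_nonneg[of p] pos by (intro dapi_mode_has_integral) auto
  qed
  also have "\<dots> = (\<Sum>p\<in>UNIV. if \<mu> p = 0 then 0 else \<alpha> / (2 * m) * dapi_gain m \<tau> \<gamma> k (\<mu> p))"
    using \<mu>_nonneg pos by (intro sum.cong refl) auto
  finally show ?thesis .
qed

lemma H2sq_std_eigenbasis:
  fixes L :: "real^'n^'n"
  assumes onb: "orthonormal_basis u" and eig: "\<And>p. L *v u p = \<mu> p *\<^sub>R u p"
    and \<mu>_nonneg: "\<And>p. 0 \<le> \<mu> p"
    and pos: "\<alpha> > 0" "m > 0" "\<tau> > 0"
  shows "H2sq_std L \<alpha> m \<tau> = (\<Sum>p\<in>UNIV. if \<mu> p = 0 then 0 else \<alpha> / (2 * m))"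
proof -
  have "H2sq_std L \<alpha> m \<tau> = (\<Sum>p\<in>UNIV. (sqrt (\<alpha> * \<mu> p))^2 * (1 / (2 * m * \<mu> p)))"
    unfolding H2sq_std_def A_std_def B_std_def C_std_def
  proof (rule h2sq_block_modes[where Mm = "\<lambda>p. std_mode_matrix m \<tau> (\<mu> p)"
        and \<beta> = "std_mode_input \<tau>" and s = "\<lambda>p. sqrt (\<alpha> * \<mu> p)"])
    show "orthonormal_basis u" by (rule onb)
    show "msqrt (\<alpha> *\<^sub>R L) *v u p = sqrt (\<alpha> * \<mu> p) *\<^sub>R u p" for p
      by (rule msqrt_scaleR_eigenbasis[OF onb eig \<mu>_nonneg pos(1)])
    show "(if a = 0 then mat 0 else (1 / \<tau>) *\<^sub>R mat 1) *v u p = std_mode_input \<tau> $ a *\<^sub>R u p" for p a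
      by (simp add: std_mode_input_def scaleR_matrix_vector_assoc[symmetric])
    show "(if a = 0 \<and> b = 0 then mat 0 else if a = 0 \<and> b = 1 then mat 1
           else if a = 1 \<and> b = 0 then (- m / \<tau>) *\<^sub>R L else (- 1 / \<tau>) *\<^sub>R mat 1) *v u p
        = std_mode_matrix m \<tau> (\<mu> p) $ a $ b *\<^sub>R u p" for p a b
      by (simp add: std_mode_matrix_def scaleR_matrix_vector_assoc[symmetric] eig uminus_matrix_vector_mult)
    show "((\<lambda>t. ((mexp (t *\<^sub>R std_mode_matrix m \<tau> (\<mu> p)) *v std_mode_input \<tau>) $ 0)^2)
            has_integral 1 / (2 * m * \<mu> p)) {0..}"
      if "sqrt (\<alpha> * \<mu> p) \<noteq> 0" for p
      using that \<mu>_nonneg[of p] pos by (intro std_mode_has_integral) auto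
  qed
  also have "\<dots> = (\<Sum>p\<in>UNIV. if \<mu> p = 0 then 0 else \<alpha> / (2 * m))"
    using \<mu>_nonneg pos by (intro sum.cong refl) auto
  finally show ?thesis .
qed

section \<open>Dependence on the integral time constant\<close>

lemma dapi_gain_strict_mono:
  fixes \<gamma> \<tau> l m k1 k2 :: real
  assumes "\<gamma> > 0" "\<tau> > 0" "l > 0" "m > 0" "0 < k1" "k1 < k2"
  shows "dapi_gain m \<tau> \<gamma> k1 l < dapi_gain m \<tau> \<gamma> k2 l"
proof -
  define P1 where "P1 = \<gamma> * \<tau> * l + k1"
  define P2 where "P2 = \<gamma> * \<tau> * l + k2"
  define D1 where "D1 = \<gamma> * l * P1 + k1\<^sup>2 * m * l"
  define D2 where "D2 = \<gamma> * l * P2 + k2\<^sup>2 * m * l"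
  have gtl: "\<gamma> * \<tau> * l > 0" using assms by simp
  have P: "P1 > 0" "P2 > 0" using assms gtl by (auto simp: P1_def P2_def intro!: add_pos_pos)
  have D: "D1 > 0" "D2 > 0" using assms P by (simp_all add: D1_def D2_def add_pos_nonneg)
  have key: "P1 * k2\<^sup>2 - P2 * k1\<^sup>2 = (k2 - k1) * (\<gamma> * \<tau> * l * (k2 + k1) + k1 * k2)"
    by (simp add: P1_def P2_def power2_eq_square algebra_simps)
  have "(k2 - k1) * (\<gamma> * \<tau> * l * (k2 + k1) + k1 * k2) > 0"
    using assms gtl by (intro mult_pos_pos add_pos_pos) auto
  then have k: "P2 * k1\<^sup>2 < P1 * k2\<^sup>2" using key by simp
  have "P1 * D2 - P2 * D1 = m * l * (P1 * k2\<^sup>2 - P2 * k1\<^sup>2)"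
    by (simp add: D1_def D2_def algebra_simps)
  moreover have "m * l * (P1 * k2\<^sup>2 - P2 * k1\<^sup>2) > 0" using k assms by simp
  ultimately have "P2 * D1 < P1 * D2" by simp
  then have X: "P2 / D2 < P1 / D1" using D by (simp add: field_simps)
  have "P2 / D2 > 0" using P D by simp
  then have "1 / (1 + P1 / D1) < 1 / (1 + P2 / D2)"
    using X by (intro divide_strict_left_mono) auto
  then show ?thesis by (simp add: dapi_gain_def P1_def P2_def D1_def D2_def)
qed

lemma dapi_gain_tendsto_one:
  fixes \<gamma> \<tau> l m :: real
  assumes "\<gamma> > 0" "\<tau> > 0" "l > 0" "m > 0"
  shows "((\<lambda>k. dapi_gain m \<tau> \<gamma> k l) \<longlongrightarrow> 1) at_top"
proof -
  define A where "A = \<gamma> * \<tau> * l"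
  define C where "C = m * l"
  have A: "A > 0" and C: "C > 0" using assms by (simp_all add: A_def C_def)
  define f where "f k = (\<gamma> * \<tau> * l + k) / (\<gamma> * l * (\<gamma> * \<tau> * l + k) + k\<^sup>2 * m * l)" for k
  have ub: "((\<lambda>k. A / (k^2 * C) + 1 / (k * C)) \<longlongrightarrow> 0) at_top" using C by real_asymp
  have "(f \<longlongrightarrow> 0) at_top"
  proof (rule tendsto_sandwich[OF _ _ tendsto_const ub])
    show "\<forall>\<^sub>F k in at_top. 0 \<le> f k"
      using eventually_gt_at_top[of "0::real"]
      by (rule eventually_mono) (use assms in \<open>auto simp: f_def intro!: divide_nonneg_nonneg add_nonneg_nonneg\<close>)
    show "\<forall>\<^sub>F k in at_top. f k \<le> A / (k^2 * C) + 1 / (k * C)"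
      using eventually_gt_at_top[of "0::real"]
    proof (rule eventually_mono)
      fix k :: real assume k: "0 < k"
      have den: "k\<^sup>2 * C \<le> \<gamma> * l * (A + k) + k\<^sup>2 * m * l"
        using assms k A by (simp add: C_def)
      have e1: "f k = (A + k) / (\<gamma> * l * (A + k) + k\<^sup>2 * m * l)" by (simp add: f_def A_def)
      have kc: "0 < k\<^sup>2 * C" using k C by simp
      have "0 < (\<gamma> * l * (A + k) + k\<^sup>2 * m * l) * (k\<^sup>2 * C)"
      proof -
        have "0 < \<gamma> * l * (A + k) + k\<^sup>2 * m * l" using den kc by linarith
        then show ?thesis using kc by simp
      qed
      then have e2: "(A + k) / (\<gamma> * l * (A + k) + k\<^sup>2 * m * l) \<le> (A + k) / (k\<^sup>2 * C)"
        using A k den by (intro divide_left_mono) auto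
      have e3: "(A + k) / (k\<^sup>2 * C) = A / (k^2 * C) + 1 / (k * C)"
        using k C by (simp add: field_simps power2_eq_square)
      show "f k \<le> A / (k^2 * C) + 1 / (k * C)" using e1 e2 e3 by simp
    qed
  qed
  then have "((\<lambda>k. 1 / (1 + f k)) \<longlongrightarrow> 1 / (1 + 0)) at_top"
    by (intro tendsto_intros) auto
  then show ?thesis by (simp add: dapi_gain_def f_def)
qed

lemma sum_dapi_gain_strict_mono:
  assumes "finite I" "I \<noteq> {}" and lam: "\<And>n. n \<in> I \<Longrightarrow> lam n > 0"
    and pos: "c > 0" "m > 0" "\<tau> > 0" "\<gamma> > 0"
  shows "strict_mono_on {0<..} (\<lambda>k. c * (\<Sum>n\<in>I. dapi_gain m \<tau> \<gamma> k (lam n)))"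
proof (rule strict_mono_onI)
  fix r s :: real assume "r \<in> {0<..}" "s \<in> {0<..}" "r < s"
  then have "(\<Sum>n\<in>I. dapi_gain m \<tau> \<gamma> r (lam n)) < (\<Sum>n\<in>I. dapi_gain m \<tau> \<gamma> s (lam n))"
    using assms by (intro sum_strict_mono dapi_gain_strict_mono) auto
  then show "c * (\<Sum>n\<in>I. dapi_gain m \<tau> \<gamma> r (lam n)) < c * (\<Sum>n\<in>I. dapi_gain m \<tau> \<gamma> s (lam n))"
    using pos(1) by simp
qed

lemma sum_dapi_gain_tendsto:
  assumes lam: "\<And>n. n \<in> I \<Longrightarrow> lam n > 0" and pos: "m > 0" "\<tau> > 0" "\<gamma> > 0"
  shows "((\<lambda>k. c * (\<Sum>n\<in>I. dapi_gain m \<tau> \<gamma> k (lam n))) \<longlongrightarrow> c * real (card I)) at_top"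
proof -
  have "((\<lambda>k. c * (\<Sum>n\<in>I. dapi_gain m \<tau> \<gamma> k (lam n))) \<longlongrightarrow> c * (\<Sum>n\<in>I. 1)) at_top"
    using assms by (intro tendsto_mult tendsto_const tendsto_sum dapi_gain_tendsto_one) auto
  then show ?thesis by simp
qed

theorem mainTheorem6:
  fixes w :: "'n::finite \<Rightarrow> 'n \<Rightarrow> real"
    and lam :: "nat \<Rightarrow> real"
    and \<alpha> m \<tau> \<gamma> :: real
  defines "L \<equiv> weighted_laplacian w"
    and "N \<equiv> CARD('n)"
  assumes N2: "N \<ge> 2"
    and w_sym: "\<And>i j. w i j = w j i"
    and w_nonneg: "\<And>i j. 0 \<le> w i j"
    and conn: "graph_connected w"
    and eig: "\<And>x. det (x *\<^sub>R mat 1 - L) = (\<Prod>i=1..N. (x - lam i))"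
    and lam1: "lam 1 = 0"
    and lam12: "lam 1 < lam 2"
    and sorted: "\<And>i j. 1 \<le> i \<Longrightarrow> i \<le> j \<Longrightarrow> j \<le> N \<Longrightarrow> lam i \<le> lam j"
    and pos: "\<alpha> > 0" "m > 0" "\<tau> > 0" "\<gamma> > 0"
  shows "(\<forall>k>0. H2sq_dapi L \<alpha> m \<tau> \<gamma> k =
              \<alpha> / (2 * m) * (\<Sum>n=2..N. 1 / (1 + (\<gamma> * \<tau> * lam n + k) /
                 (\<gamma> * lam n * (\<gamma> * \<tau> * lam n + k) + k\<^sup>2 * m * lam n))))
         \<and> strict_mono_on {0<..} (\<lambda>k. H2sq_dapi L \<alpha> m \<tau> \<gamma> k)
         \<and> ((\<lambda>k. H2sq_dapi L \<alpha> m \<tau> \<gamma> k) \<longlongrightarrow> \<alpha> / (2 * m) * real (N - 1)) at_top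
         \<and> H2sq_std L \<alpha> m \<tau> = \<alpha> / (2 * m) * real (N - 1)"
proof -
  have symL: "transpose L = L"
    unfolding L_def by (auto simp: vec_eq_iff transpose_def weighted_laplacian_def w_sym)
  have lam_pos: "0 < lam n" if "2 \<le> n" "n \<le> N" for n
    using sorted[of 2 n] that lam1 lam12 by simp
  obtain u \<mu> where onb: "orthonormal_basis u" and eigu: "\<And>p. L *v u p = \<mu> p *\<^sub>R u p"
    and \<mu>_nonneg: "\<And>p. 0 \<le> \<mu> p"
    and spectral_sum: "\<And>f :: real \<Rightarrow> real. (\<Sum>p\<in>UNIV. if \<mu> p = 0 then 0 else f (\<mu> p)) = (\<Sum>n=2..N. f (lam n))"
    using symmetric_matrix_spectral_sum[OF symL eig[unfolded N_def] lam1 lam_pos[unfolded N_def]]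
    unfolding N_def by blast
  have H_dapi: "H2sq_dapi L \<alpha> m \<tau> \<gamma> k = \<alpha> / (2 * m) * (\<Sum>n=2..N. dapi_gain m \<tau> \<gamma> k (lam n))"
    if "k > 0" for k
    using H2sq_dapi_eigenbasis[OF onb eigu \<mu>_nonneg pos that]
      spectral_sum[of "\<lambda>x. \<alpha> / (2 * m) * dapi_gain m \<tau> \<gamma> k x"] by (simp add: sum_distrib_left)
  have mono: "strict_mono_on {0<..} (H2sq_dapi L \<alpha> m \<tau> \<gamma>)"
    using sum_dapi_gain_strict_mono[of "{2..N}" lam "\<alpha> / (2 * m)" m \<tau> \<gamma>] N2 lam_pos pos
    by (auto simp: strict_mono_on_def H_dapi)
  have eventually_H_dapi: "\<forall>\<^sub>F k in at_top. H2sq_dapi L \<alpha> m \<tau> \<gamma> k = \<alpha> / (2 * m) * (\<Sum>n=2..N. dapi_gain m \<tau> \<gamma> k (lam n))"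
    using eventually_gt_at_top[of "0::real"] by (rule eventually_mono) (rule H_dapi)
  have lim: "(H2sq_dapi L \<alpha> m \<tau> \<gamma> \<longlongrightarrow> \<alpha> / (2 * m) * real (N - 1)) at_top"
    unfolding tendsto_cong[OF eventually_H_dapi]
    using sum_dapi_gain_tendsto[of "{2..N}" lam m \<tau> \<gamma> "\<alpha> / (2 * m)"] lam_pos pos by auto
  have H_std: "H2sq_std L \<alpha> m \<tau> = \<alpha> / (2 * m) * real (N - 1)"
    using H2sq_std_eigenbasis[OF onb eigu \<mu>_nonneg pos(1-3)] spectral_sum[of "\<lambda>_. \<alpha> / (2 * m)"] by simp
  show ?thesis using H_dapi mono lim H_std by (simp add: dapi_gain_def)
qed

end
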